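(* Let $M$ be a von Neumann algebra acting on a Hilbert space $H$ and let $a, b \in [0,1]_M$ be strict in $M$. Then: (1) $a^{1/2}$ is strict in $M$; (2) if $ab = ba$, then $ab$ is strict in $M$.
   Context: $[0,1]_M = \{x \in M : 0 \le x \le 1\}$, and $\mathcal{P}(M)$ is the set of projections of $M$. For $x \in [0,1]_M$ define $s(x) = \sup\{q \in \mathcal{P}(M) : q \le x\}$ and $n(x) = \sup\{q \in \mathcal{P}(M) : qx = 0\}$; $x$ is called strict in $M$ if $s(x) = 0$ and $n(x) = 0$. *)

theory Defs
  imports Complex_Main
begin

class chilbert = ab_group_add +
  fixes scaleC :: "complex \<Rightarrow> 'a \<Rightarrow> 'a" (infixr \<open>*\<^sub>C\<close> 75)
    and cinner :: "'a \<Rightarrow> 'a \<Rightarrow> complex"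
  assumes scaleC_add_right: "c *\<^sub>C (x + y) = c *\<^sub>C x + c *\<^sub>C y"
    and scaleC_add_left: "(c + d) *\<^sub>C x = c *\<^sub>C x + d *\<^sub>C x"
    and scaleC_scaleC: "c *\<^sub>C (d *\<^sub>C x) = (c * d) *\<^sub>C x"
    and scaleC_one: "1 *\<^sub>C x = x"
    and cinner_add_right: "cinner x (y + z) = cinner x y + cinner x z"
    and cinner_scaleC_right: "cinner x (c *\<^sub>C y) = c * cinner x y"
    and cinner_commute: "cinner y x = cnj (cinner x y)"
    and cinner_nonneg: "Im (cinner x x) = 0 \<and> Re (cinner x x) \<ge> 0"
    and cinner_eq_zero: "cinner x x = 0 \<longleftrightarrow> x = 0"
    and complete: "(\<forall>e>0. \<exists>N::nat. \<forall>m\<ge>N. \<forall>n\<ge>N. sqrt (Re (cinner ((X::nat\<Rightarrow>'a) m - X n) (X m - X n))) < e)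
        \<Longrightarrow> (\<exists>L. \<forall>e>0. \<exists>N::nat. \<forall>n\<ge>N. sqrt (Re (cinner (X n - L) (X n - L))) < e)"

definition cnorm :: "'a::chilbert \<Rightarrow> real" where
  "cnorm x = sqrt (Re (cinner x x))"

text \<open>Operators are represented as functions on the space; multiplication is composition.\<close>

definition bounded_op :: "('a::chilbert \<Rightarrow> 'a) \<Rightarrow> bool" where
  "bounded_op T \<longleftrightarrow> (\<forall>x y. T (x + y) = T x + T y) \<and> (\<forall>c x. T (c *\<^sub>C x) = c *\<^sub>C T x)
     \<and> (\<exists>K. \<forall>x. cnorm (T x) \<le> K * cnorm x)"

definition adj :: "('a::chilbert \<Rightarrow> 'a) \<Rightarrow> ('a \<Rightarrow> 'a)" where
  "adj T = (THE S. \<forall>x y. cinner (S x) y = cinner x (T y))"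

definition commutant :: "('a::chilbert \<Rightarrow> 'a) set \<Rightarrow> ('a \<Rightarrow> 'a) set" where
  "commutant S = {T. bounded_op T \<and> (\<forall>A\<in>S. T \<circ> A = A \<circ> T)}"

text \<open>A von Neumann algebra on the Hilbert space: a self-adjoint set of bounded operators
  equal to its bicommutant (von Neumann's bicommutant characterisation).\<close>

definition von_neumann_algebra :: "('a::chilbert \<Rightarrow> 'a) set \<Rightarrow> bool" where
  "von_neumann_algebra M \<longleftrightarrow> (\<forall>T\<in>M. adj T \<in> M) \<and> commutant (commutant M) = M"

definition zero_op :: "'a::chilbert \<Rightarrow> 'a" where
  "zero_op = (\<lambda>_. 0)"

definition positive_op :: "('a::chilbert \<Rightarrow> 'a) \<Rightarrow> bool" where
  "positive_op T \<longleftrightarrow> bounded_op T \<and> (\<forall>x. Im (cinner x (T x)) = 0 \<and> Re (cinner x (T x)) \<ge> 0)"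

definition op_le :: "('a::chilbert \<Rightarrow> 'a) \<Rightarrow> ('a \<Rightarrow> 'a) \<Rightarrow> bool" where
  "op_le A B \<longleftrightarrow> bounded_op A \<and> bounded_op B \<and> positive_op (\<lambda>x. B x - A x)"

definition unit_interval :: "('a::chilbert \<Rightarrow> 'a) set \<Rightarrow> ('a \<Rightarrow> 'a) set" where
  "unit_interval M = {x\<in>M. op_le zero_op x \<and> op_le x id}"

definition projections :: "('a::chilbert \<Rightarrow> 'a) set \<Rightarrow> ('a \<Rightarrow> 'a) set" where
  "projections M = {p\<in>M. p \<circ> p = p \<and> adj p = p}"

definition proj_sup :: "('a::chilbert \<Rightarrow> 'a) set \<Rightarrow> ('a \<Rightarrow> 'a) set \<Rightarrow> ('a \<Rightarrow> 'a)" where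
  "proj_sup M S = (THE p. p \<in> projections M \<and> (\<forall>q\<in>S. op_le q p)
      \<and> (\<forall>r\<in>projections M. (\<forall>q\<in>S. op_le q r) \<longrightarrow> op_le p r))"

definition support_s :: "('a::chilbert \<Rightarrow> 'a) set \<Rightarrow> ('a \<Rightarrow> 'a) \<Rightarrow> ('a \<Rightarrow> 'a)" where
  "support_s M x = proj_sup M {q\<in>projections M. op_le q x}"

definition null_n :: "('a::chilbert \<Rightarrow> 'a) set \<Rightarrow> ('a \<Rightarrow> 'a) \<Rightarrow> ('a \<Rightarrow> 'a)" where
  "null_n M x = proj_sup M {q\<in>projections M. q \<circ> x = zero_op}"

definition strict_in :: "('a::chilbert \<Rightarrow> 'a) set \<Rightarrow> ('a \<Rightarrow> 'a) \<Rightarrow> bool" where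
  "strict_in M x \<longleftrightarrow> support_s M x = zero_op \<and> null_n M x = zero_op"

definition op_sqrt :: "('a::chilbert \<Rightarrow> 'a) \<Rightarrow> ('a \<Rightarrow> 'a)" where
  "op_sqrt a = (THE b. positive_op b \<and> b \<circ> b = a)"

end

theory Submission
  imports Defs "HOL-Computational_Algebra.Polynomial"
begin

text \<open>For \<open>0 \<le> x \<le> 1\<close> in \<open>M\<close>, \<open>n(x)\<close> is the projection onto \<open>ker x\<close> and \<open>s(x)\<close> the
  projection onto \<open>ker (1 - x)\<close>: both projections lie in \<open>M\<close> because the commutant of \<open>M\<close>
  leaves these kernels invariant. Hence \<open>x\<close> is strict iff \<open>x\<close> and \<open>1 - x\<close> are injective,
  and the converse implication holds for every selfadjoint contraction.

  For \<open>c = a\<^sup>1\<^sup>/\<^sup>2\<close>, \<open>c y = 0\<close> or \<open>c y = y\<close> gives \<open>a y = 0\<close> or \<open>a y = y\<close>. For commuting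
  \<open>a\<close>, \<open>b\<close>, \<open>a b y = 0\<close> forces \<open>b y = 0\<close>; and \<open>a b y = y\<close> forces \<open>\<parallel>b y\<parallel> = \<parallel>y\<parallel>\<close>,
  which for \<open>0 \<le> b \<le> 1\<close> means \<open>b y = y\<close> (as \<open>\<parallel>b y\<parallel>\<^sup>2 \<le> \<langle>y, b y\<rangle>\<close>), and then \<open>a y = y\<close>.

  Since \<open>op_sqrt\<close> is a definite description, the positive square root must be shown to exist
  and be unique; it is \<open>1 - lim Y\<^sub>n\<close> for increasing polynomials \<open>Y\<^sub>n\<close> in \<open>1 - a\<close>.\<close>

section \<open>Inner products and norms\<close>

lemma scaleC_zero_left [simp]: "(0::complex) *\<^sub>C (x::'a::chilbert) = 0"
proof -
  have "(0 + 0) *\<^sub>C x = 0 *\<^sub>C x + 0 *\<^sub>C x" by (rule scaleC_add_left)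
  then show ?thesis by simp
qed

lemma scaleC_zero_right [simp]: "c *\<^sub>C (0::'a::chilbert) = 0"
proof -
  have "c *\<^sub>C (0 + 0) = c *\<^sub>C (0::'a) + c *\<^sub>C 0" by (rule scaleC_add_right)
  then show ?thesis by simp
qed

lemma scaleC_minus_right: "c *\<^sub>C (- x) = - (c *\<^sub>C (x::'a::chilbert))"
  by (metis add.right_inverse minus_unique scaleC_add_right scaleC_zero_right)

lemma scaleC_minus_left: "(- c) *\<^sub>C x = - (c *\<^sub>C (x::'a::chilbert))"
  by (metis add.right_inverse minus_unique scaleC_add_left scaleC_zero_left)

lemma scaleC_diff_right: "c *\<^sub>C (x - y) = c *\<^sub>C x - c *\<^sub>C (y::'a::chilbert)"
  by (simp only: diff_conv_add_uminus scaleC_add_right scaleC_minus_right)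

lemma scaleC_minus_one: "(- 1) *\<^sub>C x = - (x::'a::chilbert)"
  by (simp add: scaleC_minus_left scaleC_one)

lemma scaleC_two: "(2::complex) *\<^sub>C x = x + (x::'a::chilbert)"
  using scaleC_add_left[of 1 1 x] by (simp add: scaleC_one)

lemma scaleC_sum: "r *\<^sub>C sum f A = (\<Sum>i\<in>A. r *\<^sub>C (f i :: 'a::chilbert))"
  by (induction A rule: infinite_finite_induct) (auto simp: scaleC_add_right)

lemma cinner_add_left: "cinner (x + y) (z::'a::chilbert) = cinner x z + cinner y z"
  by (metis cinner_commute cinner_add_right complex_cnj_add)

lemma cinner_scaleC_left: "cinner (c *\<^sub>C x) (y::'a::chilbert) = cnj c * cinner x y"
  by (metis cinner_commute cinner_scaleC_right complex_cnj_mult)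

lemma cinner_zero_right [simp]: "cinner x (0::'a::chilbert) = 0"
  using cinner_scaleC_right[of x 0 0] by simp

lemma cinner_zero_left [simp]: "cinner (0::'a::chilbert) x = 0"
  using cinner_scaleC_left[of 0 0 x] by simp

lemma cinner_minus_right: "cinner x (- y) = - cinner x (y::'a::chilbert)"
  by (metis add.right_inverse cinner_add_right cinner_zero_right minus_unique)

lemma cinner_minus_left: "cinner (- x) y = - cinner x (y::'a::chilbert)"
  by (metis add.right_inverse cinner_add_left cinner_zero_left minus_unique)

lemma cinner_diff_right: "cinner x (y - z) = cinner x y - cinner x (z::'a::chilbert)"
  by (simp only: diff_conv_add_uminus cinner_add_right cinner_minus_right)

lemma cinner_diff_left: "cinner (x - y) z = cinner x z - cinner y (z::'a::chilbert)"
  by (simp only: diff_conv_add_uminus cinner_add_left cinner_minus_left)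

lemmas cinner_simps = cinner_add_left cinner_add_right cinner_diff_left cinner_diff_right
  cinner_scaleC_left cinner_scaleC_right cinner_minus_left cinner_minus_right

lemma cinner_sum_right: "cinner x (sum f A) = (\<Sum>i\<in>A. cinner x (f i :: 'a::chilbert))"
  by (induction A rule: infinite_finite_induct) (auto simp: cinner_add_right)

lemma cinner_zero_commute: "cinner x y = 0 \<longleftrightarrow> cinner y (x::'a::chilbert) = 0"
  by (metis cinner_commute complex_cnj_zero_iff)

lemma cinner_self_Im [simp]: "Im (cinner x (x::'a::chilbert)) = 0"
  using cinner_nonneg by blast

lemma cinner_self_Re_nonneg [simp]: "Re (cinner x (x::'a::chilbert)) \<ge> 0"
  using cinner_nonneg by blast

lemma cinner_ext: "(\<And>y. cinner y x = cinner y x') \<Longrightarrow> x = (x'::'a::chilbert)"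
  by (metis cinner_diff_right cinner_eq_zero eq_iff_diff_eq_0)

lemma cinner_ext_left: "(\<And>y. cinner x y = cinner x' y) \<Longrightarrow> x = (x'::'a::chilbert)"
  by (metis cinner_diff_left cinner_eq_zero eq_iff_diff_eq_0)

lemma cinner_ext_zero: "(\<And>y. cinner y x = 0) \<Longrightarrow> x = (0::'a::chilbert)"
  using cinner_ext[of x 0] by simp

lemma cnorm_nonneg [simp]: "cnorm x \<ge> 0"
  by (simp add: cnorm_def)

lemma cnorm_square: "(cnorm x)\<^sup>2 = Re (cinner x (x::'a::chilbert))"
  by (simp add: cnorm_def)

lemma cnorm_zero [simp]: "cnorm (0::'a::chilbert) = 0"
  by (simp add: cnorm_def)

lemma cinner_self_cnorm: "cinner x x = complex_of_real ((cnorm (x::'a::chilbert))\<^sup>2)"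
  by (simp add: cnorm_square complex_eq_iff)

lemma cnorm_eq_zero [simp]: "cnorm x = 0 \<longleftrightarrow> x = (0::'a::chilbert)"
  using cinner_eq_zero[of x] by (auto simp: cinner_self_cnorm)

lemma cnorm_gt_zero: "x \<noteq> 0 \<Longrightarrow> cnorm (x::'a::chilbert) > 0"
  using cnorm_eq_zero cnorm_nonneg by (metis less_eq_real_def)

definition linear_op :: "('a::chilbert \<Rightarrow> 'a) \<Rightarrow> bool" where
  "linear_op T \<longleftrightarrow> (\<forall>x y. T (x + y) = T x + T y) \<and> (\<forall>c x. T (c *\<^sub>C x) = c *\<^sub>C T x)"

definition selfadjoint :: "('a::chilbert \<Rightarrow> 'a) \<Rightarrow> bool" where
  "selfadjoint T \<longleftrightarrow> (\<forall>x y. cinner (T x) y = cinner x (T y))"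

lemma linear_opD:
  assumes "linear_op T"
  shows "T (x + y) = T x + T y" "T (c *\<^sub>C x) = c *\<^sub>C T x" "T 0 = 0"
    "T (- x) = - T x" "T (x - y) = T x - T y"
proof -
  show add: "T (x + y) = T x + T y" for x y using assms by (simp add: linear_op_def)
  show scale: "T (c *\<^sub>C x) = c *\<^sub>C T x" for c x using assms by (simp add: linear_op_def)
  show "T 0 = 0" using scale[of 0 0] by simp
  show minus: "T (- x) = - T x" for x using scale[of "-1" x] by (simp add: scaleC_minus_one)
  show "T (x - y) = T x - T y" using add[of x "- y"] minus[of y] by simp
qed

lemma selfadjointD: "selfadjoint T \<Longrightarrow> cinner (T x) y = cinner x (T y)"
  by (simp add: selfadjoint_def)

lemma selfadjoint_form_real: "selfadjoint T \<Longrightarrow> Im (cinner x (T x)) = 0"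
  by (metis cinner_commute cnj.sel(2) neg_equal_zero selfadjointD)

lemma linear_op_id: "linear_op (id::'a::chilbert \<Rightarrow> 'a)"
  by (simp add: linear_op_def)

lemma selfadjoint_id: "selfadjoint (id::'a::chilbert \<Rightarrow> 'a)"
  by (simp add: selfadjoint_def)

lemma nonneg_quadratic_imp_le:
  fixes A U C :: real
  assumes "\<And>t. 0 \<le> A - 2*t*U + t*t*U*C" and "U \<ge> 0" and "C \<ge> 0"
  shows "U \<le> A * C"
proof (cases "C = 0")
  case True
  show ?thesis
  proof (rule ccontr)
    assume "\<not> U \<le> A * C"
    then have "U > 0" using True by simp
    have "0 \<le> A - 2*((A+1)/(2*U))*U + ((A+1)/(2*U))*((A+1)/(2*U))*U*C"
      using assms(1) .
    then have "0 \<le> A - (A + 1)" using \<open>U>0\<close> True by (simp add: field_simps)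
    then show False by simp
  qed
next
  case False
  then have "C > 0" using assms(3) by simp
  have "0 \<le> A - 2*(1/C)*U + (1/C)*(1/C)*U*C" using assms(1) .
  then have "U/C \<le> A" using \<open>C>0\<close> by (simp add: field_simps)
  then show ?thesis using \<open>C>0\<close> by (simp add: field_simps)
qed

lemma cauchy_schwarz_form:
  assumes "linear_op T" and "selfadjoint T" and "\<And>z. Re (cinner z (T z)) \<ge> 0"
  shows "(cmod (cinner x (T y)))\<^sup>2 \<le> Re (cinner x (T x)) * Re (cinner y (T y))"
proof -
  define u where "u = cinner x (T y)"
  define A where "A = Re (cinner x (T x))"
  define C where "C = Re (cinner y (T y))"
  have yx: "cinner y (T x) = cnj u"
    using selfadjointD[OF assms(2), of y x] unfolding u_def by (metis cinner_commute)
  have "0 \<le> A - 2*t*(cmod u)\<^sup>2 + t*t*(cmod u)\<^sup>2*C" for t :: real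
  proof -
    \<comment> \<open>the form at \<open>x - t cnj u y\<close> is a nonnegative quadratic in the real \<open>t\<close>\<close>
    define s where "s = - (complex_of_real t * cnj u)"
    have "Re (cinner (x + s *\<^sub>C y) (T (x + s *\<^sub>C y))) \<ge> 0" by (rule assms(3))
    also have "cinner (x + s *\<^sub>C y) (T (x + s *\<^sub>C y)) =
      cinner x (T x) + s * cinner x (T y) + cnj s * cinner y (T x) + cnj s * s * cinner y (T y)"
      by (simp add: linear_opD[OF assms(1)] cinner_simps algebra_simps)
    finally have 0: "0 \<le> Re (cinner x (T x) + s * u + cnj s * cnj u + cnj s * s * cinner y (T y))"
      by (simp add: u_def yx)
    have su: "s * u = - complex_of_real (t * (cmod u)\<^sup>2)"
      unfolding s_def of_real_mult complex_norm_square by (simp add: mult.commute mult.left_commute)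
    have ss: "cnj s * s = complex_of_real (t * t * (cmod u)\<^sup>2)"
      unfolding s_def of_real_mult complex_norm_square by (simp add: mult.commute mult.left_commute)
    have csu: "cnj s * cnj u = - complex_of_real (t * (cmod u)\<^sup>2)"
      using arg_cong[OF su, of cnj] by simp
    show ?thesis using 0 unfolding su csu ss A_def C_def by simp
  qed
  moreover have "A \<ge> 0" "C \<ge> 0" using assms(3) by (auto simp: A_def C_def)
  ultimately have "(cmod u)\<^sup>2 \<le> A * C"
    using nonneg_quadratic_imp_le[of A "(cmod u)\<^sup>2" C] by (simp add: mult.assoc)
  then show ?thesis by (simp add: u_def A_def C_def)
qed

lemma cauchy_schwarz: "cmod (cinner x y) \<le> cnorm x * cnorm (y::'a::chilbert)"
proof (rule power2_le_imp_le)
  show "(cmod (cinner x y))\<^sup>2 \<le> (cnorm x * cnorm y)\<^sup>2"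
    using cauchy_schwarz_form[OF linear_op_id selfadjoint_id, of x y]
    by (simp add: cnorm_square power_mult_distrib)
qed simp

lemma Re_cinner_le: "Re (cinner x y) \<le> cnorm x * cnorm (y::'a::chilbert)"
  using cauchy_schwarz[of x y] complex_Re_le_cmod order_trans by blast

lemma cnorm_add_square:
  "(cnorm (x + y))\<^sup>2 = (cnorm x)\<^sup>2 + 2 * Re (cinner x y) + (cnorm (y::'a::chilbert))\<^sup>2"
  using cinner_commute[of y x] by (simp add: cnorm_square cinner_simps)

lemma cnorm_diff_square:
  "(cnorm (x - y))\<^sup>2 = (cnorm x)\<^sup>2 - 2 * Re (cinner x y) + (cnorm (y::'a::chilbert))\<^sup>2"
  using cinner_commute[of y x] by (simp add: cnorm_square cinner_simps)

lemma cnorm_triangle: "cnorm (x + y) \<le> cnorm x + cnorm (y::'a::chilbert)"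
proof (rule power2_le_imp_le)
  show "(cnorm (x + y))\<^sup>2 \<le> (cnorm x + cnorm y)\<^sup>2"
    using cnorm_add_square[of x y] Re_cinner_le[of x y] by (simp add: power2_sum)
qed simp

lemma cnorm_minus: "cnorm (- x) = cnorm (x::'a::chilbert)"
  by (simp add: cnorm_def cinner_minus_left cinner_minus_right)

lemma cnorm_minus_commute: "cnorm (x - y) = cnorm (y - (x::'a::chilbert))"
  by (metis cnorm_minus minus_diff_eq)

lemma cnorm_diff_le: "cnorm (x - y) \<le> cnorm x + cnorm (y::'a::chilbert)"
  using cnorm_triangle[of x "- y"] by (simp add: cnorm_minus)

lemma cnorm_diff_triangle: "cnorm (x - z) \<le> cnorm (x - y) + cnorm (y - (z::'a::chilbert))"
  using cnorm_triangle[of "x - y" "y - z"] by simp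

lemma cnorm_reverse_triangle: "\<bar>cnorm x - cnorm y\<bar> \<le> cnorm (x - (y::'a::chilbert))"
  using cnorm_diff_triangle[of x 0 y] cnorm_diff_triangle[of y 0 x] cnorm_minus_commute[of x y]
  by (simp add: cnorm_minus)

lemma cnorm_scaleC: "cnorm (c *\<^sub>C x) = cmod c * cnorm (x::'a::chilbert)"
proof (rule power2_eq_imp_eq)
  have "cinner (c *\<^sub>C x) (c *\<^sub>C x) = (cnj c * c) * cinner x x"
    by (simp add: cinner_scaleC_left cinner_scaleC_right)
  also have "cnj c * c = complex_of_real ((cmod c)\<^sup>2)"
    by (metis complex_norm_square mult.commute)
  finally have "cinner (c *\<^sub>C x) (c *\<^sub>C x) = complex_of_real ((cmod c * cnorm x)\<^sup>2)"
    by (simp add: cinner_self_cnorm power_mult_distrib)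
  then show "(cnorm (c *\<^sub>C x))\<^sup>2 = (cmod c * cnorm x)\<^sup>2"
    by (simp add: cnorm_square)
qed simp_all

lemma parallelogram_law:
  "(cnorm (x - y))\<^sup>2 + (cnorm (x + y))\<^sup>2 = 2 * (cnorm x)\<^sup>2 + 2 * (cnorm (y::'a::chilbert))\<^sup>2"
  using cnorm_add_square[of x y] cnorm_diff_square[of x y] by simp

section \<open>Norm convergence\<close>

definition converges :: "(nat \<Rightarrow> 'a::chilbert) \<Rightarrow> 'a \<Rightarrow> bool" where
  "converges X L \<longleftrightarrow> (\<lambda>n. cnorm (X n - L)) \<longlonglongrightarrow> 0"

lemma convergesI:
  assumes "\<And>n. cnorm (X n - L) \<le> f n" and "f \<longlonglongrightarrow> 0"
  shows "converges X L"
  unfolding converges_def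
proof (rule tendsto_0_le[OF assms(2), of _ 1])
  have "cnorm (X n - L) \<le> \<bar>f n\<bar>" for n using assms(1)[of n] by linarith
  then show "\<forall>\<^sub>F n in sequentially. norm (cnorm (X n - L)) \<le> norm (f n) * 1" by simp
qed

lemma converges_unique:
  assumes "converges X L" and "converges X L'" shows "L = L'"
proof -
  have "(\<lambda>n. cnorm (X n - L) + cnorm (X n - L')) \<longlonglongrightarrow> 0"
    using tendsto_add[OF assms[unfolded converges_def]] by simp
  moreover have "cnorm (L - L') \<le> cnorm (X n - L) + cnorm (X n - L')" for n
    using cnorm_diff_triangle[of L L' "X n"] cnorm_minus_commute[of L "X n"] by linarith
  ultimately have "cnorm (L - L') \<le> 0" by (intro LIMSEQ_le_const) auto
  then show ?thesis by (metis antisym cnorm_eq_zero cnorm_nonneg right_minus_eq)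
qed

lemma converges_const: "converges (\<lambda>n. x) x"
  by (simp add: converges_def)

lemma converges_add:
  assumes "converges X L" and "converges Y L'" shows "converges (\<lambda>n. X n + Y n) (L + L')"
proof (rule convergesI)
  show "cnorm (X n + Y n - (L + L')) \<le> cnorm (X n - L) + cnorm (Y n - L')" for n
    using cnorm_triangle[of "X n - L" "Y n - L'"] by (simp add: algebra_simps)
  show "(\<lambda>n. cnorm (X n - L) + cnorm (Y n - L')) \<longlonglongrightarrow> 0"
    using tendsto_add[OF assms[unfolded converges_def]] by simp
qed

lemma converges_diff:
  assumes "converges X L" and "converges Y L'" shows "converges (\<lambda>n. X n - Y n) (L - L')"
proof (rule convergesI)
  show "cnorm (X n - Y n - (L - L')) \<le> cnorm (X n - L) + cnorm (Y n - L')" for n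
    using cnorm_diff_le[of "X n - L" "Y n - L'"] by (simp add: algebra_simps)
  show "(\<lambda>n. cnorm (X n - L) + cnorm (Y n - L')) \<longlonglongrightarrow> 0"
    using tendsto_add[OF assms[unfolded converges_def]] by simp
qed

lemma converges_Suc: "converges X L \<Longrightarrow> converges (\<lambda>n. X (Suc n)) L"
  unfolding converges_def by (rule LIMSEQ_Suc)

lemma converges_linear_op:
  assumes "linear_op T" and "\<And>x. cnorm (T x) \<le> K * cnorm x" and "converges X L"
  shows "converges (\<lambda>n. T (X n)) (T L)"
proof (rule convergesI)
  show "cnorm (T (X n) - T L) \<le> K * cnorm (X n - L)" for n
    using assms(2)[of "X n - L"] by (simp add: linear_opD[OF assms(1)])
  show "(\<lambda>n. K * cnorm (X n - L)) \<longlonglongrightarrow> 0"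
    using tendsto_mult_right_zero[OF assms(3)[unfolded converges_def]] .
qed

lemma converges_scaleC:
  assumes "converges X L" shows "converges (\<lambda>n. c *\<^sub>C X n) (c *\<^sub>C L)"
proof (rule convergesI)
  show "cnorm (c *\<^sub>C X n - c *\<^sub>C L) \<le> cmod c * cnorm (X n - L)" for n
    by (simp add: cnorm_scaleC flip: scaleC_diff_right)
  show "(\<lambda>n. cmod c * cnorm (X n - L)) \<longlonglongrightarrow> 0"
    using tendsto_mult_right_zero[OF assms[unfolded converges_def]] .
qed

lemma converges_cinner:
  assumes "converges X L" shows "(\<lambda>n. cinner z (X n)) \<longlonglongrightarrow> cinner z L"
proof -
  have "(\<lambda>n. cinner z (X n) - cinner z L) \<longlonglongrightarrow> 0"
  proof (rule tendsto_0_le)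
    show "(\<lambda>n. cnorm z * cnorm (X n - L)) \<longlonglongrightarrow> 0"
      using tendsto_mult_right_zero[OF assms[unfolded converges_def]] .
    show "\<forall>\<^sub>F n in sequentially.
        norm (cinner z (X n) - cinner z L) \<le> norm (cnorm z * cnorm (X n - L)) * 1"
      using cauchy_schwarz[of z] by (simp add: cinner_diff_right[symmetric])
  qed
  then show ?thesis by (simp add: LIM_zero_iff)
qed

lemma converges_cnorm:
  assumes "converges X L" shows "(\<lambda>n. cnorm (X n)) \<longlonglongrightarrow> cnorm L"
proof -
  have "(\<lambda>n. cnorm (X n) - cnorm L) \<longlonglongrightarrow> 0"
  proof (rule tendsto_0_le)
    show "(\<lambda>n. cnorm (X n - L)) \<longlonglongrightarrow> 0" using assms by (simp add: converges_def)
    show "\<forall>\<^sub>F n in sequentially. norm (cnorm (X n) - cnorm L) \<le> norm (cnorm (X n - L)) * 1"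
      by (simp add: cnorm_reverse_triangle)
  qed
  then show ?thesis by (simp add: LIM_zero_iff)
qed

lemma Cauchy_converges:
  assumes "\<And>e. e > 0 \<Longrightarrow> \<exists>N. \<forall>m\<ge>N. \<forall>n\<ge>N. cnorm (X m - X n) < e"
  shows "\<exists>L. converges X (L::'a::chilbert)"
proof -
  obtain L where "\<forall>e>0. \<exists>N. \<forall>n\<ge>N. cnorm (X n - L) < e"
    using complete[of X] assms unfolding cnorm_def by blast
  then have "(\<lambda>n. cnorm (X n - L)) \<longlonglongrightarrow> 0"
    unfolding LIMSEQ_iff by simp
  then show ?thesis unfolding converges_def by blast
qed

section \<open>Orthogonal projections\<close>

definition closed_subspace :: "'a::chilbert set \<Rightarrow> bool" where
  "closed_subspace K \<longleftrightarrow> 0 \<in> K \<and> (\<forall>x\<in>K. \<forall>y\<in>K. x + y \<in> K) \<and> (\<forall>c. \<forall>x\<in>K. c *\<^sub>C x \<in> K)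
     \<and> (\<forall>X L. (\<forall>n. X n \<in> K) \<longrightarrow> converges X L \<longrightarrow> L \<in> K)"

lemma closed_subspaceD:
  assumes "closed_subspace K"
  shows "0 \<in> K" "x \<in> K \<Longrightarrow> y \<in> K \<Longrightarrow> x + y \<in> K" "x \<in> K \<Longrightarrow> c *\<^sub>C x \<in> K"
    "(\<And>n. X n \<in> K) \<Longrightarrow> converges X L \<Longrightarrow> L \<in> K"
  using assms unfolding closed_subspace_def by blast+

lemma closed_subspace_diff:
  assumes "closed_subspace K" and "x \<in> K" and "y \<in> K" shows "x - y \<in> K"
  using closed_subspaceD(2)[OF assms(1) assms(2) closed_subspaceD(3)[OF assms(1) assms(3)]]
  by (metis diff_conv_add_uminus scaleC_minus_one)

lemma closed_subspace_kernel:
  assumes "bounded_op g" shows "closed_subspace {x. g x = 0}"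
  unfolding closed_subspace_def
proof (intro conjI ballI allI impI)
  have lin: "linear_op g" using assms by (simp add: bounded_op_def linear_op_def)
  then show "0 \<in> {x. g x = 0}" by (simp add: linear_opD)
  show "x + y \<in> {x. g x = 0}" if "x \<in> {x. g x = 0}" "y \<in> {x. g x = 0}" for x y
    using that lin by (simp add: linear_opD)
  show "c *\<^sub>C x \<in> {x. g x = 0}" if "x \<in> {x. g x = 0}" for c x
    using that lin by (simp add: linear_opD)
  fix X L assume X: "\<forall>n. X n \<in> {x. g x = 0}" and "converges X L"
  obtain K where "\<And>x. cnorm (g x) \<le> K * cnorm x" using assms by (auto simp: bounded_op_def)
  then have "converges (\<lambda>n. g (X n)) (g L)" by (rule converges_linear_op[OF lin _ \<open>converges X L\<close>])
  then show "L \<in> {x. g x = 0}" using X converges_unique[OF _ converges_const] by fastforce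
qed

lemma cnorm_diff_midpoint:
  "(cnorm (k - l))\<^sup>2 = 2 * (cnorm (x - k))\<^sup>2 + 2 * (cnorm (x - l))\<^sup>2
     - 4 * (cnorm (x - (1/2) *\<^sub>C (k + l)))\<^sup>2"
proof -
  have "x - l + (x - k) = (2::complex) *\<^sub>C (x - (1/2) *\<^sub>C (k + l))"
    by (simp add: scaleC_diff_right scaleC_scaleC scaleC_one scaleC_two)
  then have "(cnorm (x - l + (x - k)))\<^sup>2 = 4 * (cnorm (x - (1/2) *\<^sub>C (k + l)))\<^sup>2"
    by (simp add: cnorm_scaleC power_mult_distrib)
  then show ?thesis using parallelogram_law[of "x - l" "x - k"] by simp
qed

lemma minimizing_sequence_converges:
  assumes K: "closed_subspace K" and kK: "\<And>n. k n \<in> K"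
    and d_le: "\<And>k. k \<in> K \<Longrightarrow> d \<le> (cnorm (x - k))\<^sup>2"
    and kd: "\<And>n. (cnorm (x - k n))\<^sup>2 < d + 1 / (real n + 1)"
  shows "\<exists>p. converges k p"
proof (rule Cauchy_converges)
  \<comment> \<open>the midpoint of \<open>k m\<close> and \<open>k n\<close> lies in \<open>K\<close>, so it is at distance at least \<open>\<surd>d\<close> from \<open>x\<close>\<close>
  have k_diff: "(cnorm (k m - k n))\<^sup>2 \<le> 2 / (real m + 1) + 2 / (real n + 1)" for m n
  proof -
    have "(1/2) *\<^sub>C (k m + k n) \<in> K" using closed_subspaceD(2,3)[OF K] kK by blast
    moreover have "2 / (real i + 1) = 2 * (1 / (real i + 1))" for i by simp
    ultimately show ?thesis
      using cnorm_diff_midpoint[of "k m" "k n" x] d_le kd[of m] kd[of n] by fastforce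
  qed
  fix e :: real assume "e > 0"
  obtain N :: nat where N: "4 / e\<^sup>2 < real N + 1"
    using reals_Archimedean2[of "4 / e\<^sup>2"] by (meson less_add_one less_trans)
  have "cnorm (k m - k n) < e" if "m \<ge> N" "n \<ge> N" for m n
  proof -
    have frac: "2 / (real i + 1) \<le> 2 / (real N + 1)" if "i \<ge> N" for i
      using that by (simp add: frac_le)
    have "2 / (real m + 1) + 2 / (real n + 1) \<le> 2 / (real N + 1) + 2 / (real N + 1)"
      using frac[OF \<open>m \<ge> N\<close>] frac[OF \<open>n \<ge> N\<close>] by linarith
    also have "\<dots> = 4 / (real N + 1)" by simp
    also have "\<dots> < e\<^sup>2" using N \<open>e > 0\<close> by (simp add: field_simps)
    finally have "(cnorm (k m - k n))\<^sup>2 < e\<^sup>2" using k_diff[of m n] by linarith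
    then show ?thesis using \<open>e > 0\<close> by (simp add: power_less_imp_less_base)
  qed
  then show "\<exists>N. \<forall>m\<ge>N. \<forall>n\<ge>N. cnorm (k m - k n) < e" by blast
qed

lemma closed_subspace_nearest_point:
  assumes K: "closed_subspace K"
  shows "\<exists>p\<in>K. \<forall>k\<in>K. (cnorm (x - p))\<^sup>2 \<le> (cnorm (x - k))\<^sup>2"
proof -
  define d where "d = (INF k\<in>K. (cnorm (x - k))\<^sup>2)"
  have bdd: "bdd_below ((\<lambda>k. (cnorm (x - k))\<^sup>2) ` K)" by (rule bdd_belowI[of _ 0]) auto
  have d_le: "d \<le> (cnorm (x - k))\<^sup>2" if "k \<in> K" for k
    unfolding d_def using bdd that by (rule cINF_lower)
  have "K \<noteq> {}" using closed_subspaceD(1)[OF K] by blast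
  have "\<exists>k\<in>K. (cnorm (x - k))\<^sup>2 < d + 1 / (real n + 1)" for n
    using cINF_less_iff[OF \<open>K \<noteq> {}\<close> bdd, of "d + 1 / (real n + 1)"] unfolding d_def by simp
  then obtain k where kK: "\<And>n. k n \<in> K"
    and kd: "\<And>n. (cnorm (x - k n))\<^sup>2 < d + 1 / (real n + 1)"
    by metis
  then obtain p where p: "converges k p"
    using minimizing_sequence_converges[OF K _ d_le] by blast
  have pK: "p \<in> K" using closed_subspaceD(4)[OF K kK p] .
  have "(\<lambda>n. (cnorm (x - k n))\<^sup>2) \<longlonglongrightarrow> (cnorm (x - p))\<^sup>2"
    by (intro tendsto_power converges_cnorm converges_diff[OF converges_const p])
  moreover have "(\<lambda>n. d + 1 / (real n + 1)) \<longlonglongrightarrow> d"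
    using LIMSEQ_inverse_real_of_nat_add[of d] by (simp add: inverse_eq_divide add.commute)
  ultimately have "(cnorm (x - p))\<^sup>2 \<le> d"
    using kd by (intro LIMSEQ_le) (auto intro: less_imp_le)
  then show ?thesis using pK d_le order_trans by blast
qed

lemma nearest_point_orthogonal:
  assumes K: "closed_subspace K" and pK: "p \<in> K"
    and nearest: "\<And>k. k \<in> K \<Longrightarrow> (cnorm (x - p))\<^sup>2 \<le> (cnorm (x - k))\<^sup>2"
    and kK: "k \<in> K"
  shows "cinner k (x - p) = 0"
proof -
  define u where "u = cinner k (x - p)"
  have "cinner (x - p) k = cnj u" unfolding u_def by (metis cinner_commute)
  have "0 \<le> 0 - 2*t*(cmod u)\<^sup>2 + t*t*(cmod u)\<^sup>2*(cnorm k)\<^sup>2" for t :: real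
  proof -
    define s where "s = complex_of_real t * u"
    have "p + s *\<^sub>C k \<in> K" using closed_subspaceD(2,3)[OF K] pK kK by blast
    then have le: "(cnorm (x - p))\<^sup>2 \<le> (cnorm ((x - p) - s *\<^sub>C k))\<^sup>2"
      using nearest by (simp add: algebra_simps)
    have "cinner (x - p) (s *\<^sub>C k) = complex_of_real t * (u * cnj u)"
      using \<open>cinner (x - p) k = cnj u\<close> by (simp add: cinner_scaleC_right s_def)
    then have "(cnorm ((x - p) - s *\<^sub>C k))\<^sup>2
        = (cnorm (x - p))\<^sup>2 - 2 * (t * (cmod u)\<^sup>2) + (t * cmod u * cnorm k)\<^sup>2"
      by (simp add: cnorm_diff_square cnorm_scaleC s_def norm_mult power_mult_distrib
          flip: complex_norm_square)
    with le show ?thesis by (simp add: power_mult_distrib power2_eq_square algebra_simps)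
  qed
  from nonneg_quadratic_imp_le[OF this] show ?thesis by (simp add: u_def)
qed

definition orth_proj :: "'a::chilbert set \<Rightarrow> 'a \<Rightarrow> 'a" where
  "orth_proj K x = (SOME p. p \<in> K \<and> (\<forall>k\<in>K. cinner k (x - p) = 0))"

lemma orth_proj_in:
  assumes "closed_subspace K"
  shows "orth_proj K x \<in> K" and "k \<in> K \<Longrightarrow> cinner k (x - orth_proj K x) = 0"
proof -
  have "\<exists>p. p \<in> K \<and> (\<forall>k\<in>K. cinner k (x - p) = 0)"
    using closed_subspace_nearest_point[OF assms] nearest_point_orthogonal[OF assms] by meson
  from someI_ex[OF this] show "orth_proj K x \<in> K" "k \<in> K \<Longrightarrow> cinner k (x - orth_proj K x) = 0"
    unfolding orth_proj_def by blast+
qed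

lemma orth_proj_unique:
  assumes K: "closed_subspace K" and "p \<in> K" and "\<And>k. k \<in> K \<Longrightarrow> cinner k (x - p) = 0"
  shows "orth_proj K x = p"
proof -
  define q where "q = orth_proj K x"
  have "q \<in> K" and q_orth: "\<And>k. k \<in> K \<Longrightarrow> cinner k (x - q) = 0"
    unfolding q_def using orth_proj_in[OF K] by auto
  then have "q - p \<in> K" using closed_subspace_diff[OF K _ assms(2)] by blast
  then have "cinner (q - p) ((x - p) - (x - q)) = 0"
    using assms(3) q_orth by (simp add: cinner_diff_right)
  then have "cinner (q - p) (q - p) = 0" by simp
  then show ?thesis by (simp add: cinner_eq_zero q_def)
qed

lemma orth_proj_id: "closed_subspace K \<Longrightarrow> k \<in> K \<Longrightarrow> orth_proj K k = k"
  by (rule orth_proj_unique) auto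

lemma orth_proj_zero_opD:
  assumes "closed_subspace K" and "orth_proj K = zero_op" and "k \<in> K" shows "k = 0"
  using orth_proj_id[OF assms(1,3)] assms(2) by (simp add: zero_op_def)

lemma orth_proj_idem: "closed_subspace K \<Longrightarrow> orth_proj K (orth_proj K x) = orth_proj K x"
  using orth_proj_id orth_proj_in(1) by blast

lemma linear_op_orth_proj:
  assumes K: "closed_subspace K" shows "linear_op (orth_proj K)"
  unfolding linear_op_def
proof (intro conjI allI)
  fix x y
  show "orth_proj K (x + y) = orth_proj K x + orth_proj K y"
  proof (rule orth_proj_unique[OF K])
    show "orth_proj K x + orth_proj K y \<in> K" using K orth_proj_in(1)[OF K]
      by (simp add: closed_subspaceD)
    fix k assume "k \<in> K"
    then have "cinner k ((x - orth_proj K x) + (y - orth_proj K y)) = 0"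
      using orth_proj_in(2)[OF K] by (simp add: cinner_add_right)
    then show "cinner k (x + y - (orth_proj K x + orth_proj K y)) = 0"
      by (simp add: algebra_simps)
  qed
next
  fix c x
  show "orth_proj K (c *\<^sub>C x) = c *\<^sub>C orth_proj K x"
  proof (rule orth_proj_unique[OF K])
    show "c *\<^sub>C orth_proj K x \<in> K" using K orth_proj_in(1)[OF K] by (simp add: closed_subspaceD)
    fix k assume "k \<in> K"
    then show "cinner k (c *\<^sub>C x - c *\<^sub>C orth_proj K x) = 0"
      using orth_proj_in(2)[OF K] by (simp add: cinner_scaleC_right flip: scaleC_diff_right)
  qed
qed

lemma selfadjoint_orth_proj:
  assumes K: "closed_subspace K" shows "selfadjoint (orth_proj K)"
  unfolding selfadjoint_def
proof (intro allI)
  fix x y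
  have "cinner (orth_proj K x) (y - orth_proj K y) = 0"
    and "cinner (x - orth_proj K x) (orth_proj K y) = 0"
    using orth_proj_in[OF K] cinner_zero_commute by blast+
  then show "cinner (orth_proj K x) y = cinner x (orth_proj K y)"
    by (simp add: cinner_diff_right cinner_diff_left)
qed

lemma cnorm_orth_proj_le: "closed_subspace K \<Longrightarrow> cnorm (orth_proj K x) \<le> cnorm x"
proof (rule power2_le_imp_le)
  assume K: "closed_subspace K"
  have "cinner (orth_proj K x) (x - orth_proj K x) = 0" using orth_proj_in[OF K] by blast
  then show "(cnorm (orth_proj K x))\<^sup>2 \<le> (cnorm x)\<^sup>2"
    using cnorm_add_square[of "orth_proj K x" "x - orth_proj K x"] by simp
qed simp

lemma bounded_op_orth_proj: "closed_subspace K \<Longrightarrow> bounded_op (orth_proj K)"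
  using linear_op_orth_proj[of K] cnorm_orth_proj_le[of K] unfolding bounded_op_def linear_op_def
  by (metis mult_1)

section \<open>Adjoints\<close>

lemma closed_subspace_functional_kernel:
  fixes phi :: "'a::chilbert \<Rightarrow> complex"
  assumes add: "\<And>x y. phi (x + y) = phi x + phi y"
    and scale: "\<And>c x. phi (c *\<^sub>C x) = c * phi x"
    and bounded: "\<And>x. cmod (phi x) \<le> B * cnorm x"
  shows "closed_subspace {x. phi x = 0}"
  unfolding closed_subspace_def
proof (intro conjI allI ballI impI)
  show "0 \<in> {x. phi x = 0}" using scale[of 0 0] by simp
  show "x + y \<in> {x. phi x = 0}" if "x \<in> {x. phi x = 0}" "y \<in> {x. phi x = 0}" for x y
    using that by (simp add: add)
  show "c *\<^sub>C x \<in> {x. phi x = 0}" if "x \<in> {x. phi x = 0}" for c x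
    using that by (simp add: scale)
  fix X L assume XK: "\<forall>n. X n \<in> {x. phi x = 0}" and "converges X L"
  have "phi (X n - L) = - phi L" for n
    using XK add[of "X n" "(-1) *\<^sub>C L"] scale[of "-1" L] by (simp add: scaleC_minus_one)
  then have "cmod (phi L) \<le> B * cnorm (X n - L)" for n
    using bounded[of "X n - L"] by simp
  moreover have "(\<lambda>n. B * cnorm (X n - L)) \<longlonglongrightarrow> 0"
    using tendsto_mult_right_zero[of "\<lambda>n. cnorm (X n - L)"] \<open>converges X L\<close>
    by (simp add: converges_def)
  ultimately have "cmod (phi L) \<le> 0" by (intro LIMSEQ_le_const) auto
  then show "L \<in> {x. phi x = 0}" by simp
qed

lemma riesz_representation:
  fixes phi :: "'a::chilbert \<Rightarrow> complex"
  assumes add: "\<And>x y. phi (x + y) = phi x + phi y"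
    and scale: "\<And>c x. phi (c *\<^sub>C x) = c * phi x"
    and bounded: "\<And>x. cmod (phi x) \<le> B * cnorm x"
  shows "\<exists>z. \<forall>y. phi y = cinner z y"
proof (cases "\<forall>y. phi y = 0")
  case True
  then show ?thesis by (intro exI[of _ 0]) simp
next
  case False
  have diff: "phi (x - y) = phi x - phi y" for x y
    using add[of x "(-1) *\<^sub>C y"] scale[of "-1" y] by (simp add: scaleC_minus_one)
  define K where "K = {x. phi x = 0}"
  have K: "closed_subspace K" unfolding K_def using closed_subspace_functional_kernel[OF assms] .
  \<comment> \<open>a nonzero vector \<open>w\<close> orthogonal to the kernel spans the complement of the kernel\<close>
  obtain u where "phi u \<noteq> 0" using False by blast
  define w where "w = u - orth_proj K u"
  have "phi (orth_proj K u) = 0" using orth_proj_in(1)[OF K] by (simp add: K_def)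
  then have pw: "phi w = phi u" by (simp add: w_def diff)
  have w_orth: "cinner w k = 0" if "k \<in> K" for k
    using orth_proj_in(2)[OF K that, of u] cinner_zero_commute unfolding w_def by blast
  have ww: "cinner w w \<noteq> 0" using pw \<open>phi u \<noteq> 0\<close> scale[of 0 0] by (auto simp: cinner_eq_zero)
  have "phi y = cinner ((cnj (phi w / cinner w w)) *\<^sub>C w) y" for y
  proof -
    have "phi w *\<^sub>C y - phi y *\<^sub>C w \<in> K" by (simp add: K_def diff scale mult.commute)
    then have "cinner w (phi w *\<^sub>C y - phi y *\<^sub>C w) = 0" by (rule w_orth)
    then have "phi w * cinner w y = phi y * cinner w w"
      by (simp add: cinner_diff_right cinner_scaleC_right)
    then show ?thesis using ww by (simp add: cinner_scaleC_left field_simps)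
  qed
  then show ?thesis by blast
qed

lemma bounded_op_linear: "bounded_op T \<Longrightarrow> linear_op T"
  by (simp add: bounded_op_def linear_op_def)

lemma bounded_opI: "linear_op T \<Longrightarrow> (\<And>x. cnorm (T x) \<le> K * cnorm x) \<Longrightarrow> bounded_op T"
  unfolding bounded_op_def linear_op_def by blast

lemma adj_cinner:
  assumes "bounded_op T"
  shows "cinner (adj T x) y = cinner x (T y)"
proof -
  obtain K where K: "\<And>x. cnorm (T x) \<le> K * cnorm x" using assms by (auto simp: bounded_op_def)
  have lin: "linear_op T" using assms by (rule bounded_op_linear)
  have "\<exists>z. \<forall>y. cinner x (T y) = cinner z y" for x
  proof (rule riesz_representation)
    show "cinner x (T (y + z)) = cinner x (T y) + cinner x (T z)" for y z
      by (simp add: linear_opD[OF lin] cinner_add_right)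
    show "cinner x (T (c *\<^sub>C y)) = c * cinner x (T y)" for c y
      by (simp add: linear_opD[OF lin] cinner_scaleC_right)
    show "cmod (cinner x (T y)) \<le> (cnorm x * K) * cnorm y" for y
      using cauchy_schwarz[of x "T y"] mult_left_mono[OF K[of y] cnorm_nonneg[of x]]
      by (simp add: mult.assoc)
  qed
  then obtain S where S: "\<forall>x y. cinner (S x) y = cinner x (T y)" by metis
  have "\<exists>!S. \<forall>x y. cinner (S x) y = cinner x (T y)"
  proof (rule ex1I[of _ S])
    fix S' assume "\<forall>x y. cinner (S' x) y = cinner x (T y)"
    with S show "S' = S" by (simp add: fun_eq_iff cinner_ext_left)
  qed (rule S)
  from theI'[OF this] show ?thesis unfolding adj_def by blast
qed

lemma adj_selfadjoint: "bounded_op T \<Longrightarrow> selfadjoint T \<Longrightarrow> adj T = T"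
  by (intro ext cinner_ext_left) (simp add: adj_cinner selfadjointD)

lemma selfadjoint_if_adj_eq: "bounded_op T \<Longrightarrow> adj T = T \<Longrightarrow> selfadjoint T"
  unfolding selfadjoint_def by (metis adj_cinner)

lemma linear_op_adj:
  assumes "bounded_op T" shows "linear_op (adj T)"
  unfolding linear_op_def
proof (intro allI conjI; rule cinner_ext_left)
  have T: "linear_op T" using assms by (rule bounded_op_linear)
  show "cinner (adj T (x + y)) z = cinner (adj T x + adj T y) z" for x y z
    by (simp add: adj_cinner[OF assms] cinner_add_left)
  show "cinner (adj T (c *\<^sub>C x)) z = cinner (c *\<^sub>C adj T x) z" for c x z
    by (simp add: adj_cinner[OF assms] cinner_scaleC_left)
qed

lemma adj_commute:
  assumes "bounded_op T" and "selfadjoint g" and "\<And>x. T (g x) = g (T x)"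
  shows "adj T (g x) = g (adj T x)"
proof (rule cinner_ext_left)
  fix y
  have "cinner (adj T (g x)) y = cinner x (g (T y))"
    by (simp add: adj_cinner[OF assms(1)] selfadjointD[OF assms(2)] assms(3) flip: assms(3))
  also have "\<dots> = cinner (g (adj T x)) y"
    by (simp add: adj_cinner[OF assms(1)] selfadjointD[OF assms(2)] assms(3))
  finally show "cinner (adj T (g x)) y = cinner (g (adj T x)) y" .
qed

lemma orth_proj_commute:
  assumes K: "closed_subspace K" and T: "linear_op T"
    and TK: "\<And>k. k \<in> K \<Longrightarrow> T k \<in> K" and SK: "\<And>k. k \<in> K \<Longrightarrow> S k \<in> K"
    and S: "\<And>x y. cinner (S x) y = cinner x (T y)"
  shows "orth_proj K (T x) = T (orth_proj K x)"
proof (rule orth_proj_unique[OF K])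
  show "T (orth_proj K x) \<in> K" using TK orth_proj_in(1)[OF K] by blast
  fix k assume "k \<in> K"
  then have "cinner (S k) (x - orth_proj K x) = 0" using SK orth_proj_in(2)[OF K] by blast
  then show "cinner k (T x - T (orth_proj K x)) = 0" by (simp add: S linear_opD[OF T])
qed

section \<open>Positive operators\<close>

lemma linear_op_diff: "linear_op A \<Longrightarrow> linear_op B \<Longrightarrow> linear_op (\<lambda>x. A x - B x)"
  unfolding linear_op_def by (simp add: scaleC_diff_right algebra_simps)

lemma bounded_op_diff:
  assumes A: "bounded_op A" and B: "bounded_op B" shows "bounded_op (\<lambda>x. A x - B x)"
proof -
  obtain K1 where K1: "\<And>x. cnorm (A x) \<le> K1 * cnorm x" using A by (auto simp: bounded_op_def)
  obtain K2 where K2: "\<And>x. cnorm (B x) \<le> K2 * cnorm x" using B by (auto simp: bounded_op_def)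
  show ?thesis
  proof (rule bounded_opI)
    show "linear_op (\<lambda>x. A x - B x)" using linear_op_diff bounded_op_linear A B by blast
    show "cnorm (A x - B x) \<le> (K1 + K2) * cnorm x" for x
      using cnorm_diff_le[of "A x" "B x"] K1[of x] K2[of x] by (simp add: distrib_right)
  qed
qed

lemma bounded_op_zero: "bounded_op (zero_op :: 'a::chilbert \<Rightarrow> 'a)"
  by (rule bounded_opI[of _ 0]) (auto simp: zero_op_def linear_op_def)

lemma bounded_op_id: "bounded_op (id :: 'a::chilbert \<Rightarrow> 'a)"
  by (rule bounded_opI[of _ 1]) (auto simp: linear_op_def)

lemma selfadjoint_zero: "selfadjoint (zero_op :: 'a::chilbert \<Rightarrow> 'a)"
  by (simp add: selfadjoint_def zero_op_def)

lemma selfadjoint_diff: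
  "selfadjoint A \<Longrightarrow> selfadjoint B \<Longrightarrow> selfadjoint (\<lambda>x. A x - B x)"
  by (simp add: selfadjoint_def cinner_diff_left cinner_diff_right)

lemma selfadjoint_comp_commute:
  assumes "selfadjoint a" and "selfadjoint b" and "a \<circ> b = b \<circ> a"
  shows "selfadjoint (a \<circ> b)"
  unfolding selfadjoint_def
proof (intro allI)
  fix x y
  have "cinner (a (b x)) y = cinner x (b (a y))"
    using selfadjointD[OF assms(1)] selfadjointD[OF assms(2)] by simp
  also have "b (a y) = a (b y)" using assms(3) by (metis comp_apply)
  finally show "cinner ((a \<circ> b) x) y = cinner x ((a \<circ> b) y)" by simp
qed

lemma selfadjoint_comp_eq_zero:
  assumes "selfadjoint A" and "selfadjoint B" and "\<And>z. A (B z) = 0"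
  shows "B (A x) = 0"
proof (rule cinner_ext_zero)
  fix w
  have "cinner w (B (A x)) = cinner (A (B w)) x"
    using selfadjointD[OF assms(1)] selfadjointD[OF assms(2)] by metis
  then show "cinner w (B (A x)) = 0" by (simp add: assms(3))
qed

lemma cinner_polarization:
  assumes "linear_op T"
  shows "cinner (x + y) (T (x + y))
      = cinner x (T x) + cinner y (T y) + cinner x (T y) + cinner y (T x)"
    and "cinner (x + \<i> *\<^sub>C y) (T (x + \<i> *\<^sub>C y))
      = cinner x (T x) + cinner y (T y) + \<i> * cinner x (T y) - \<i> * cinner y (T x)"
  by (simp_all add: linear_opD[OF assms] cinner_simps algebra_simps)

lemma selfadjoint_if_form_real:
  assumes "linear_op T" and "\<And>x. Im (cinner x (T x)) = 0"
  shows "selfadjoint T"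
  unfolding selfadjoint_def
proof (intro allI)
  fix x y
  have "Im (cinner x (T y) + cinner y (T x)) = 0"
    using assms(2)[of "x + y"] assms(2)[of x] assms(2)[of y]
      cinner_polarization(1)[OF assms(1), of x y]
    by simp
  moreover have "Re (cinner x (T y) - cinner y (T x)) = 0"
    using assms(2)[of "x + \<i> *\<^sub>C y"] assms(2)[of x] assms(2)[of y]
      cinner_polarization(2)[OF assms(1), of x y]
    by simp
  ultimately have "cnj (cinner y (T x)) = cinner x (T y)" by (simp add: complex_eq_iff)
  then show "cinner (T x) y = cinner x (T y)" by (metis cinner_commute)
qed

lemma form_zero_imp_zero:
  assumes "linear_op T" and "\<And>x. cinner x (T x) = 0"
  shows "T y = 0"
proof (rule cinner_ext_zero)
  fix x
  have "cinner x (T y) + cinner y (T x) = 0"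
    using assms(2)[of "x + y"] assms(2)[of x] assms(2)[of y]
      cinner_polarization(1)[OF assms(1), of x y]
    by simp
  moreover have "\<i> * cinner x (T y) - \<i> * cinner y (T x) = 0"
    using assms(2)[of "x + \<i> *\<^sub>C y"] assms(2)[of x] assms(2)[of y]
      cinner_polarization(2)[OF assms(1), of x y]
    by simp
  ultimately show "cinner x (T y) = 0" by (simp add: algebra_simps)
qed

lemma positive_op_selfadjoint: "positive_op T \<Longrightarrow> selfadjoint T"
  unfolding positive_op_def by (auto intro: selfadjoint_if_form_real bounded_op_linear)

lemma positive_op_Re_nonneg: "positive_op T \<Longrightarrow> Re (cinner x (T x)) \<ge> 0"
  unfolding positive_op_def by blast

lemma positive_op_linear: "positive_op T \<Longrightarrow> linear_op T"
  by (simp add: positive_op_def bounded_op_linear)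

lemma positive_opI:
  "bounded_op T \<Longrightarrow> selfadjoint T \<Longrightarrow> (\<And>x. Re (cinner x (T x)) \<ge> 0) \<Longrightarrow> positive_op T"
  by (simp add: positive_op_def selfadjoint_form_real)

lemma positive_op_form_zero:
  assumes "positive_op T" and "Re (cinner y (T y)) = 0"
  shows "T y = 0"
proof -
  have "(cmod (cinner (T y) (T y)))\<^sup>2 \<le> Re (cinner (T y) (T (T y))) * Re (cinner y (T y))"
    using assms(1) by (intro cauchy_schwarz_form)
      (auto simp: positive_op_linear positive_op_selfadjoint positive_op_Re_nonneg)
  then show ?thesis using assms(2) by (simp add: cinner_eq_zero)
qed

lemma op_le_form: "op_le A B \<Longrightarrow> Re (cinner x (A x)) \<le> Re (cinner x (B x))"
  by (simp add: op_le_def positive_op_def cinner_diff_right)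

lemma op_le_antisym:
  assumes "op_le A B" and "op_le B A" shows "A = B"
proof -
  have lin: "linear_op (\<lambda>x. B x - A x)"
    using assms by (auto simp: op_le_def intro: linear_op_diff bounded_op_linear)
  have "cinner x (B x - A x) = 0" for x
  proof -
    have "Re (cinner x (B x - A x)) \<ge> 0" "Im (cinner x (B x - A x)) = 0"
      and "Re (cinner x (A x - B x)) \<ge> 0"
      using assms unfolding op_le_def positive_op_def by auto
    moreover have "cinner x (A x - B x) = - cinner x (B x - A x)"
      by (simp add: cinner_diff_right)
    ultimately show ?thesis by (simp add: complex_eq_iff)
  qed
  then have "B x - A x = 0" for x using form_zero_imp_zero[OF lin] by blast
  then show ?thesis by auto
qed

lemma cnorm_square_le_form:
  assumes "positive_op T" and "\<And>x. Re (cinner x (T x)) \<le> (cnorm x)\<^sup>2"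
  shows "(cnorm (T x))\<^sup>2 \<le> Re (cinner x (T x))"
proof -
  have "(cmod (cinner (T x) (T x)))\<^sup>2 \<le> Re (cinner (T x) (T (T x))) * Re (cinner x (T x))"
    using assms(1) by (intro cauchy_schwarz_form)
      (auto simp: positive_op_linear positive_op_selfadjoint positive_op_Re_nonneg)
  also have "\<dots> \<le> (cnorm (T x))\<^sup>2 * Re (cinner x (T x))"
    using assms(2) positive_op_Re_nonneg[OF assms(1)] by (simp add: mult_right_mono)
  also have "cmod (cinner (T x) (T x)) = (cnorm (T x))\<^sup>2"
    unfolding cinner_self_cnorm norm_of_real by simp
  finally have le: "(cnorm (T x))\<^sup>2 * (cnorm (T x))\<^sup>2 \<le> (cnorm (T x))\<^sup>2 * Re (cinner x (T x))"
    by (simp add: power2_eq_square[of "(cnorm (T x))\<^sup>2"])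
  show ?thesis
  proof (cases "T x = 0")
    case False
    then have "(cnorm (T x))\<^sup>2 > 0" using cnorm_gt_zero by simp
    with le show ?thesis by (simp only: mult_le_cancel_left_pos)
  qed (simp add: positive_op_Re_nonneg[OF assms(1)])
qed

lemma cnorm_le_if_form_le:
  assumes "positive_op T" and "\<And>x. Re (cinner x (T x)) \<le> (cnorm x)\<^sup>2"
  shows "cnorm (T x) \<le> cnorm x"
proof (rule power2_le_imp_le)
  show "(cnorm (T x))\<^sup>2 \<le> (cnorm x)\<^sup>2"
    using cnorm_square_le_form[OF assms, of x] assms(2)[of x] by linarith
qed simp

lemma fixed_if_form_ge:
  assumes "cnorm (T y) \<le> cnorm y" and "Re (cinner y (T y)) \<ge> (cnorm y)\<^sup>2"
  shows "T y = y"
proof -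
  have "Re (cinner (T y) y) = Re (cinner y (T y))" using cinner_commute[of "T y" y] by simp
  then have "(cnorm (T y - y))\<^sup>2 \<le> 0"
    using cnorm_diff_square[of "T y" y] assms power_mono[OF assms(1) cnorm_nonneg, of 2] by linarith
  then show ?thesis by simp
qed

lemma fixed_if_cnorm_eq:
  assumes "positive_op T" and "\<And>x. Re (cinner x (T x)) \<le> (cnorm x)\<^sup>2"
    and "cnorm (T y) = cnorm y"
  shows "T y = y"
proof (rule fixed_if_form_ge)
  show "cnorm (T y) \<le> cnorm y" using assms(3) by simp
  show "(cnorm y)\<^sup>2 \<le> Re (cinner y (T y))"
    using cnorm_square_le_form[OF assms(1,2), of y] assms(3) by simp
qed

lemma idempotent_form:
  assumes "selfadjoint P" and "\<And>x. P (P x) = P x"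
  shows "cinner x (P x) = complex_of_real ((cnorm (P x))\<^sup>2)"
  using selfadjointD[OF assms(1), of x "P x"] by (simp add: assms(2) cinner_self_cnorm)

lemma positive_op_idempotent:
  assumes "bounded_op P" "selfadjoint P" and "\<And>x. P (P x) = P x"
  shows "positive_op P"
  unfolding positive_op_def using assms idempotent_form[OF assms(2,3)] by simp

lemma cnorm_idempotent_le:
  assumes "selfadjoint P" and "\<And>x. P (P x) = P x"
  shows "cnorm (P x) \<le> cnorm x"
proof -
  have "(cnorm (P x))\<^sup>2 \<le> cnorm x * cnorm (P x)"
    using idempotent_form[OF assms] Re_cinner_le[of x "P x"] by simp
  then show ?thesis
    by (metis cnorm_nonneg mult_le_cancel_right not_le order_less_le power2_eq_square)
qed

lemma op_le_projections:
  assumes q: "bounded_op q" "selfadjoint q" "\<And>x. q (q x) = q x"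
    and P: "bounded_op P" "selfadjoint P" "\<And>x. P (P x) = P x"
    and range: "\<And>x. P (q x) = q x"
  shows "op_le q P"
proof -
  have qP: "q (P x) = q x" for x
    by (rule cinner_ext) (metis selfadjointD q(2) P(2) range)
  have "cinner x (P x - q x) = complex_of_real ((cnorm (P x))\<^sup>2 - (cnorm (q x))\<^sup>2)" for x
    using idempotent_form[OF q(2,3)] idempotent_form[OF P(2,3)] by (simp add: cinner_diff_right)
  moreover have "cnorm (q x) \<le> cnorm (P x)" for x
    using cnorm_idempotent_le[OF q(2,3), of "P x"] qP by simp
  ultimately have "Re (cinner x (P x - q x)) \<ge> 0" for x
    by (simp add: power_mono)
  then show ?thesis using q(1) P(1) q(2) P(2)
    by (simp add: op_le_def positive_opI bounded_op_diff selfadjoint_diff)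
qed

lemma op_le_orth_proj_fixed:
  assumes "positive_op a" and K: "closed_subspace {x. a x = x}"
  shows "op_le (orth_proj {x. a x = x}) a"
proof -
  define P where "P = orth_proj {x. a x = x}"
  have lin: "linear_op a" and sa: "selfadjoint a"
    using assms(1) by (simp_all add: positive_op_linear positive_op_selfadjoint)
  \<comment> \<open>with \<open>x = u + v\<close>, \<open>u = P x\<close>, the form of \<open>a - P\<close> at \<open>x\<close> is the form of \<open>a\<close> at \<open>v\<close>\<close>
  have "cinner x (a x - P x) = cinner (x - P x) (a (x - P x))" for x
  proof -
    define u where "u = P x"
    define v where "v = x - P x"
    have au: "a u = u" using orth_proj_in(1)[OF K] by (simp add: u_def P_def)
    have uv: "cinner u v = 0" "cinner v u = 0"
      using orth_proj_in[OF K] cinner_zero_commute unfolding u_def v_def P_def by blast+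
    have "cinner u (a v) = 0" using selfadjointD[OF sa, of u v] au uv by simp
    then have "cinner x (a x) = cinner u u + cinner v (a v)"
      using uv by (simp add: u_def v_def linear_opD[OF lin] cinner_simps au[unfolded u_def])
    moreover have "cinner x (P x) = cinner u u"
      using uv by (simp add: u_def v_def cinner_simps)
    ultimately show ?thesis by (simp add: cinner_diff_right v_def)
  qed
  then have "positive_op (\<lambda>x. a x - P x)"
    using positive_op_Re_nonneg[OF assms(1)] bounded_op_orth_proj[OF K] assms(1)
      selfadjoint_diff[OF sa selfadjoint_orth_proj[OF K]]
    by (intro positive_opI bounded_op_diff) (auto simp: positive_op_def P_def)
  then show ?thesis
    using assms(1) bounded_op_orth_proj[OF K] by (simp add: op_le_def positive_op_def P_def)
qed

section \<open>Positive square roots\<close>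

lemma linear_op_sum: "linear_op T \<Longrightarrow> T (sum f A) = (\<Sum>i\<in>A. T (f i))"
  by (induction A rule: infinite_finite_induct) (auto simp: linear_opD)

definition poly_op :: "('a::chilbert \<Rightarrow> 'a) \<Rightarrow> real poly \<Rightarrow> 'a \<Rightarrow> 'a" where
  "poly_op c p x = (\<Sum>k<Suc (degree p). complex_of_real (coeff p k) *\<^sub>C (c ^^ k) x)"

lemma poly_op_bound:
  assumes "degree p < N"
  shows "poly_op c p x = (\<Sum>k<N. complex_of_real (coeff p k) *\<^sub>C (c ^^ k) x)"
  unfolding poly_op_def
proof (rule sum.mono_neutral_left)
  show "finite {..<N}" by simp
  show "{..<Suc (degree p)} \<subseteq> {..<N}" using assms by auto
  show "\<forall>i\<in>{..<N} - {..<Suc (degree p)}. complex_of_real (coeff p i) *\<^sub>C (c ^^ i) x = 0"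
    by (auto simp: coeff_eq_0)
qed

lemma poly_op_add: "poly_op c (p + q) x = poly_op c p x + poly_op c q x"
proof -
  define N where "N = Suc (max (degree p) (degree q))"
  have dpq: "degree (p + q) < N" unfolding N_def
    using degree_add_le[of p "max (degree p) (degree q)" q]
    by simp
  have dp: "degree p < N" and dq: "degree q < N" unfolding N_def by auto
  show ?thesis
    unfolding poly_op_bound[OF dpq] poly_op_bound[OF dp] poly_op_bound[OF dq]
    by (simp add: scaleC_add_left sum.distrib)
qed

lemma poly_op_smult: "poly_op c (smult r p) x = complex_of_real r *\<^sub>C poly_op c p x"
proof -
  have d: "degree (smult r p) < Suc (degree p)" by (simp add: le_imp_less_Suc)
  show ?thesis
    unfolding poly_op_bound[OF d] poly_op_def scaleC_sum by (simp add: scaleC_scaleC)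
qed

lemma poly_op_zero[simp]: "poly_op c 0 x = 0"
  by (simp add: poly_op_def)

lemma poly_op_pCons:
  assumes "linear_op c"
  shows "poly_op c (pCons r p) x = complex_of_real r *\<^sub>C x + c (poly_op c p x)"
proof -
  define N where "N = Suc (degree p)"
  have d: "degree (pCons r p) < Suc N" unfolding N_def using degree_pCons_le[of r p] by simp
  have "poly_op c (pCons r p) x = (\<Sum>k<Suc N. complex_of_real (coeff (pCons r p) k) *\<^sub>C (c ^^ k) x)"
    by (rule poly_op_bound[OF d])
  also have "\<dots> = complex_of_real r *\<^sub>C x + (\<Sum>k<N. complex_of_real (coeff p k) *\<^sub>C c ((c ^^ k) x))"
    unfolding sum.lessThan_Suc_shift by simp
  also have "(\<Sum>k<N. complex_of_real (coeff p k) *\<^sub>C c ((c ^^ k) x)) = c (poly_op c p x)"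
    unfolding poly_op_def N_def linear_op_sum[OF assms] by (simp add: linear_opD[OF assms])
  finally show ?thesis .
qed

lemma poly_op_const:
  assumes "linear_op c" shows "poly_op c [:r:] x = complex_of_real r *\<^sub>C x"
  using poly_op_pCons[OF assms, of r 0] by (simp add: linear_opD[OF assms])

lemma poly_op_X:
  assumes "linear_op c" shows "poly_op c [:0, 1:] x = c x"
  using poly_op_pCons[OF assms, of 0 "[:1:]"] poly_op_const[OF assms, of 1]
    by (simp add: scaleC_one)

lemma poly_op_mult:
  assumes "linear_op c" shows "poly_op c (p * q) x = poly_op c p (poly_op c q x)"
proof (induction p arbitrary: x)
  case 0
  then show ?case by simp
next
  case (pCons a p)
  have "poly_op c (pCons a p * q) x = complex_of_real a *\<^sub>C poly_op c q x + c (poly_op c (p * q) x)"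
    by (simp add: poly_op_add poly_op_smult poly_op_pCons[OF assms])
  also have "\<dots> = poly_op c (pCons a p) (poly_op c q x)"
    by (simp add: poly_op_pCons[OF assms] pCons.IH)
  finally show ?case .
qed

lemma linear_op_poly_op: assumes "linear_op c" shows "linear_op (poly_op c p)"
proof (induction p)
  case 0
  then show ?case by (simp add: linear_op_def)
next
  case (pCons a p)
  show ?case unfolding linear_op_def
    by (simp add: poly_op_pCons[OF assms] linear_opD[OF pCons.IH] linear_opD[OF assms]
        scaleC_add_right scaleC_scaleC mult.commute algebra_simps)
qed

lemma poly_op_commute:
  assumes "linear_op c" "linear_op T" "\<And>x. T (c x) = c (T x)"
  shows "T (poly_op c p x) = poly_op c p (T x)"
proof (induction p arbitrary: x)
  case 0
  then show ?case by (simp add: linear_opD[OF assms(2)])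
next
  case (pCons a p)
  then show ?case by (simp add: poly_op_pCons[OF assms(1)] linear_opD[OF assms(2)] assms(3))
qed

lemma selfadjoint_poly_op:
  assumes "linear_op c" "selfadjoint c" shows "selfadjoint (poly_op c p)"
proof (induction p)
  case 0
  then show ?case by (simp add: selfadjoint_def)
next
  case (pCons a p)
  show ?case unfolding selfadjoint_def
  proof (intro allI)
    fix x y
    have "cinner (c (poly_op c p x)) y = cinner x (c (poly_op c p y))"
    proof -
      have "cinner (c (poly_op c p x)) y = cinner (poly_op c p x) (c y)"
        by (rule selfadjointD[OF assms(2)])
      also have "\<dots> = cinner x (poly_op c p (c y))" by (rule selfadjointD[OF pCons.IH])
      also have "poly_op c p (c y) = c (poly_op c p y)"
        using poly_op_commute[OF assms(1) assms(1)] by simp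
      finally show ?thesis .
    qed
    then show "cinner (poly_op c (pCons a p) x) y = cinner x (poly_op c (pCons a p) y)"
      by (simp add: poly_op_pCons[OF assms(1)] cinner_add_left cinner_add_right
          cinner_scaleC_left cinner_scaleC_right)
  qed
qed

lemma funpow_form_nonneg:
  assumes "linear_op c" "selfadjoint c" "\<And>x. Re (cinner x (c x)) \<ge> 0"
  shows "Re (cinner x ((c ^^ k) x)) \<ge> 0"
proof -
  have "\<forall>x. Re (cinner x ((c ^^ k) x)) \<ge> 0 \<and> Re (cinner x ((c ^^ Suc k) x)) \<ge> 0"
  proof (induction k)
    case 0 then show ?case using assms(3) by simp
  next
    case (Suc k)
    have "Re (cinner x ((c ^^ Suc (Suc k)) x)) \<ge> 0" for x
    proof -
      have "(c ^^ Suc (Suc k)) x = c ((c ^^ k) (c x))" by (simp add: funpow_swap1)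
      then have "cinner x ((c ^^ Suc (Suc k)) x) = cinner (c x) ((c ^^ k) (c x))"
        using selfadjointD[OF assms(2)] by metis
      then show ?thesis using Suc.IH by simp
    qed
    then show ?case using Suc.IH by blast
  qed
  then show ?thesis by blast
qed

definition nonneg_coeffs :: "real poly \<Rightarrow> bool" where
  "nonneg_coeffs p \<longleftrightarrow> (\<forall>k. coeff p k \<ge> 0)"

lemma nonneg_coeffs_add: "nonneg_coeffs p \<Longrightarrow> nonneg_coeffs q \<Longrightarrow> nonneg_coeffs (p + q)"
  by (simp add: nonneg_coeffs_def)

lemma nonneg_coeffs_mult: "nonneg_coeffs p \<Longrightarrow> nonneg_coeffs q \<Longrightarrow> nonneg_coeffs (p * q)"
  unfolding nonneg_coeffs_def coeff_mult by (auto intro!: sum_nonneg)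

lemma nonneg_coeffs_const: "r \<ge> 0 \<Longrightarrow> nonneg_coeffs [:r:]"
  by (simp add: nonneg_coeffs_def coeff_pCons split: nat.split)

lemma nonneg_coeffs_X: "nonneg_coeffs [:0, 1:]"
  by (simp add: nonneg_coeffs_def coeff_pCons split: nat.split)

lemma poly_op_form_nonneg:
  assumes "linear_op c" "selfadjoint c" "\<And>x. Re (cinner x (c x)) \<ge> 0" and "nonneg_coeffs p"
  shows "Re (cinner x (poly_op c p x)) \<ge> 0"
proof -
  have "cinner x (poly_op c p x)
      = (\<Sum>k<Suc (degree p). complex_of_real (coeff p k) * cinner x ((c ^^ k) x))"
    unfolding poly_op_def cinner_sum_right by (simp add: cinner_scaleC_right)
  then have "Re (cinner x (poly_op c p x))
      = (\<Sum>k<Suc (degree p). coeff p k * Re (cinner x ((c ^^ k) x)))"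
    by simp
  also have "\<dots> \<ge> 0"
    using assms(4) funpow_form_nonneg[OF assms(1-3)] unfolding nonneg_coeffs_def
    by (intro sum_nonneg mult_nonneg_nonneg) auto
  finally show ?thesis .
qed

text \<open>For \<open>X = 1 - a\<close> the iterates \<open>Y\<^sub>n\<^sub>+\<^sub>1 = (X + Y\<^sub>n\<^sup>2) / 2\<close> increase to the solution of
  \<open>Y = (X + Y\<^sup>2) / 2\<close>, i.e. of \<open>(1 - Y)\<^sup>2 = a\<close>, so \<open>1 - lim Y\<^sub>n\<close> is the square root of \<open>a\<close>.
  The \<open>Y\<^sub>n\<close> and their increments have nonnegative coefficients, hence are positive
  operators whenever \<open>X\<close> is.\<close>

primrec sqrt_approx :: "nat \<Rightarrow> real poly" where
  "sqrt_approx 0 = 0"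
| "sqrt_approx (Suc n) = [:1/2:] * ([:0, 1:] + sqrt_approx n * sqrt_approx n)"

lemma nonneg_coeffs_sqrt_approx: "nonneg_coeffs (sqrt_approx n)"
proof (induction n)
  case 0 then show ?case by (simp add: nonneg_coeffs_def)
next
  case (Suc n)
  have "nonneg_coeffs ([:1/2:] * ([:0, 1:] + sqrt_approx n * sqrt_approx n))"
    by (intro nonneg_coeffs_mult nonneg_coeffs_add nonneg_coeffs_const nonneg_coeffs_X Suc) simp
  then show ?case by (simp only: sqrt_approx.simps)
qed

lemma nonneg_coeffs_sqrt_approx_step: "nonneg_coeffs (sqrt_approx (Suc n) - sqrt_approx n)"
proof (induction n)
  case 0 then show ?case using nonneg_coeffs_sqrt_approx[of 1] by simp
next
  case (Suc n)
  have "sqrt_approx (Suc (Suc n)) - sqrt_approx (Suc n)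
      = [:1/2:] * ((sqrt_approx (Suc n) - sqrt_approx n) * (sqrt_approx (Suc n) + sqrt_approx n))"
    by (simp only: sqrt_approx.simps(2)[of "Suc n"] sqrt_approx.simps(2)[of n])
      (simp add: algebra_simps)
  moreover have "nonneg_coeffs (sqrt_approx (Suc n) + sqrt_approx n)"
    using nonneg_coeffs_sqrt_approx nonneg_coeffs_add by blast
  moreover have "nonneg_coeffs [:1/2:]" by (rule nonneg_coeffs_const) simp
  ultimately show ?case using Suc nonneg_coeffs_mult by metis
qed

lemma nonneg_coeffs_sqrt_approx_mono: "n \<le> m \<Longrightarrow> nonneg_coeffs (sqrt_approx m - sqrt_approx n)"
proof (induction m rule: dec_induct)
  case base then show ?case by (simp add: nonneg_coeffs_def)
next
  case (step m)
  have "sqrt_approx (Suc m) - sqrt_approx n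
      = (sqrt_approx (Suc m) - sqrt_approx m) + (sqrt_approx m - sqrt_approx n)" by simp
  then show ?case using step nonneg_coeffs_sqrt_approx_step nonneg_coeffs_add by metis
qed

context
  fixes a :: "'a::chilbert \<Rightarrow> 'a"
  assumes pos: "positive_op a" and form_le: "\<And>x. Re (cinner x (a x)) \<le> (cnorm x)\<^sup>2"
begin

definition one_minus :: "'a \<Rightarrow> 'a" where
  "one_minus x = x - a x"

definition sqrt_seq :: "nat \<Rightarrow> 'a \<Rightarrow> 'a" where
  "sqrt_seq n = poly_op one_minus (sqrt_approx n)"

definition sqrt_seq_lim :: "'a \<Rightarrow> 'a" where
  "sqrt_seq_lim x = (SOME L. converges (\<lambda>n. sqrt_seq n x) L)"

definition sqrt_constr :: "'a \<Rightarrow> 'a" where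
  "sqrt_constr x = x - sqrt_seq_lim x"

lemma linear_op_one_minus: "linear_op one_minus"
  unfolding one_minus_def using linear_op_diff[OF linear_op_id positive_op_linear[OF pos]]
  by (simp add: id_def)

lemma selfadjoint_one_minus: "selfadjoint one_minus"
  unfolding one_minus_def
  using selfadjoint_diff[OF selfadjoint_id positive_op_selfadjoint[OF pos]] by (simp add: id_def)

lemma one_minus_form_nonneg: "Re (cinner x (one_minus x)) \<ge> 0"
  using form_le[of x] by (simp add: one_minus_def cinner_diff_right cnorm_square)

lemma cnorm_one_minus_le: "cnorm (one_minus x) \<le> cnorm x"
proof (rule cnorm_le_if_form_le)
  have "bounded_op one_minus"
    using bounded_op_diff[OF bounded_op_id, of a] pos
    by (simp add: positive_op_def one_minus_def[abs_def])
  then show "positive_op one_minus"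
    using selfadjoint_one_minus one_minus_form_nonneg by (rule positive_opI)
  show "Re (cinner x (one_minus x)) \<le> (cnorm x)\<^sup>2" for x
    using positive_op_Re_nonneg[OF pos, of x]
      by (simp add: one_minus_def cinner_diff_right cnorm_square)
qed

lemmas one_minus_props = linear_op_one_minus selfadjoint_one_minus one_minus_form_nonneg

lemma linear_op_sqrt_seq: "linear_op (sqrt_seq n)"
  unfolding sqrt_seq_def by (rule linear_op_poly_op[OF linear_op_one_minus])

lemma sqrt_seq_Suc: "sqrt_seq (Suc n) x = (1/2) *\<^sub>C (one_minus x + sqrt_seq n (sqrt_seq n x))"
  unfolding sqrt_seq_def sqrt_approx.simps
  by (simp add: poly_op_smult poly_op_mult poly_op_add poly_op_const poly_op_X linear_op_one_minus)

lemma sqrt_seq_diff: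
  "poly_op one_minus (sqrt_approx m - sqrt_approx n) x = sqrt_seq m x - sqrt_seq n x"
  using poly_op_add[of one_minus "sqrt_approx m - sqrt_approx n" "sqrt_approx n" x]
  by (simp add: sqrt_seq_def)

lemma cnorm_sqrt_seq_le: "cnorm (sqrt_seq n x) \<le> cnorm x"
proof (induction n arbitrary: x)
  case 0 then show ?case by (simp add: sqrt_seq_def)
next
  case (Suc n)
  have "cnorm (sqrt_seq (Suc n) x) = (1/2) * cnorm (one_minus x + sqrt_seq n (sqrt_seq n x))"
    by (simp add: sqrt_seq_Suc cnorm_scaleC)
  also have "\<dots> \<le> (1/2) * (cnorm (one_minus x) + cnorm (sqrt_seq n (sqrt_seq n x)))"
    using cnorm_triangle by (intro mult_left_mono) auto
  also have "\<dots> \<le> (1/2) * (cnorm x + cnorm x)"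
    using cnorm_one_minus_le[of x] Suc.IH[of "sqrt_seq n x"] Suc.IH[of x]
      by (intro mult_left_mono) auto
  finally show ?case by simp
qed

lemma sqrt_seq_form_le: "Re (cinner x (sqrt_seq n x)) \<le> (cnorm x)\<^sup>2"
  using Re_cinner_le[of x "sqrt_seq n x"]
    mult_left_mono[OF cnorm_sqrt_seq_le[of n x] cnorm_nonneg[of x]]
  by (simp add: power2_eq_square)

text \<open>The key estimate: Cauchy-Schwarz for the positive form of \<open>D = Y\<^sub>m - Y\<^sub>n\<close> gives
  \<open>\<parallel>D x\<parallel>\<^sup>4 = \<langle>D x, D x\<rangle>\<^sup>2 \<le> \<langle>D x, D (D x)\<rangle> \<langle>x, D x\<rangle>\<close>, so the increasing bounded
  forms \<open>\<langle>x, Y\<^sub>n x\<rangle>\<close> control the distances \<open>\<parallel>Y\<^sub>m x - Y\<^sub>n x\<parallel>\<close>.\<close>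

lemma sqrt_seq_diff_bound:
  assumes "n \<le> m"
  shows "(cnorm (sqrt_seq m x - sqrt_seq n x))^4
    \<le> 8 * (cnorm x)\<^sup>2 * (Re (cinner x (sqrt_seq m x)) - Re (cinner x (sqrt_seq n x)))"
proof -
  define D where "D = poly_op one_minus (sqrt_approx m - sqrt_approx n)"
  have Dx: "D z = sqrt_seq m z - sqrt_seq n z" for z unfolding D_def by (rule sqrt_seq_diff)
  have Dl: "linear_op D" unfolding D_def by (rule linear_op_poly_op[OF linear_op_one_minus])
  have Dh: "selfadjoint D" unfolding D_def by (rule selfadjoint_poly_op[OF one_minus_props(1,2)])
  have Dp: "Re (cinner z (D z)) \<ge> 0" for z unfolding D_def
    by (rule poly_op_form_nonneg[OF one_minus_props nonneg_coeffs_sqrt_approx_mono[OF assms]])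
  have D2: "cnorm (D z) \<le> 2 * cnorm z" for z
    using cnorm_diff_le[of "sqrt_seq m z" "sqrt_seq n z"] cnorm_sqrt_seq_le[of m z]
      cnorm_sqrt_seq_le[of n z]
    by (simp add: Dx)
  have "(cmod (cinner (D x) (D x)))\<^sup>2 \<le> Re (cinner (D x) (D (D x))) * Re (cinner x (D x))"
    by (rule cauchy_schwarz_form[OF Dl Dh Dp])
  moreover have "cmod (cinner (D x) (D x)) = (cnorm (D x))\<^sup>2"
    unfolding cinner_self_cnorm norm_of_real by simp
  moreover have "Re (cinner (D x) (D (D x))) \<le> 8 * (cnorm x)\<^sup>2"
  proof -
    have "Re (cinner (D x) (D (D x))) \<le> cnorm (D x) * cnorm (D (D x))" by (rule Re_cinner_le)
    also have "\<dots> \<le> (2 * cnorm x) * (2 * (2 * cnorm x))"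
      using D2[of x] D2[of "D x"] by (intro mult_mono) auto
    finally show ?thesis by (simp add: power2_eq_square)
  qed
  moreover have "Re (cinner x (D x)) = Re (cinner x (sqrt_seq m x)) - Re (cinner x (sqrt_seq n x))"
    by (simp add: Dx cinner_diff_right)
  ultimately have "((cnorm (D x))\<^sup>2)\<^sup>2
      \<le> 8 * (cnorm x)\<^sup>2 * (Re (cinner x (sqrt_seq m x)) - Re (cinner x (sqrt_seq n x)))"
    using Dp[of x] by (metis (no_types, lifting) mult_right_mono order_trans)
  then show ?thesis by (simp add: Dx power_mult[symmetric])
qed

lemma sqrt_seq_Cauchy: "\<exists>L. converges (\<lambda>n. sqrt_seq n x) L"
proof (rule Cauchy_converges)
  define f where "f n = Re (cinner x (sqrt_seq n x))" for n
  have inc: "incseq f"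
  proof (rule incseq_SucI)
    fix n
    have "Re (cinner x (poly_op one_minus (sqrt_approx (Suc n) - sqrt_approx n) x)) \<ge> 0"
      by (rule poly_op_form_nonneg[OF one_minus_props nonneg_coeffs_sqrt_approx_step])
    then show "f n \<le> f (Suc n)" unfolding sqrt_seq_diff f_def cinner_diff_right by simp
  qed
  have bdd: "bdd_above (range f)" unfolding f_def
    by (rule bdd_aboveI[of _ "(cnorm x)\<^sup>2"]) (auto simp: sqrt_seq_form_le)
  have "Cauchy f" using LIMSEQ_incseq_SUP[OF bdd inc] by (rule LIMSEQ_imp_Cauchy)
  define B where "B = 8 * (cnorm x)\<^sup>2 + 1"
  have B: "B > 0" by (simp add: B_def add_nonneg_pos)
  fix e :: real assume e: "e > 0"
  have "e^4 / B > 0" using e B by simp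
  then obtain N where N: "\<And>m n. m \<ge> N \<Longrightarrow> n \<ge> N \<Longrightarrow> \<bar>f m - f n\<bar> < e^4 / B"
    using \<open>Cauchy f\<close> unfolding Cauchy_def dist_real_def by metis
  have close: "cnorm (sqrt_seq m x - sqrt_seq n x) < e" if "m \<ge> N" "n \<ge> N" "n \<le> m" for m n
  proof -
    have fmn: "f m - f n \<ge> 0" using inc \<open>n \<le> m\<close> by (simp add: incseq_def)
    have "(cnorm (sqrt_seq m x - sqrt_seq n x))^4 \<le> 8 * (cnorm x)\<^sup>2 * (f m - f n)"
      using sqrt_seq_diff_bound[OF \<open>n \<le> m\<close>] by (simp add: f_def)
    also have "\<dots> \<le> B * (f m - f n)" using fmn by (intro mult_right_mono) (auto simp: B_def)
    also have "\<dots> < B * (e^4 / B)" using N[OF that(1,2)] fmn B by (intro mult_strict_left_mono) auto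
    also have "\<dots> = e^4" using B by simp
    finally show ?thesis using e by (simp add: power_less_imp_less_base)
  qed
  show "\<exists>N. \<forall>m\<ge>N. \<forall>n\<ge>N. cnorm (sqrt_seq m x - sqrt_seq n x) < e"
  proof (intro exI allI impI)
    fix m n assume "m \<ge> N" "n \<ge> N"
    then show "cnorm (sqrt_seq m x - sqrt_seq n x) < e"
      using close[of m n] close[of n m] cnorm_minus_commute[of "sqrt_seq m x" "sqrt_seq n x"]
      by (cases "n \<le> m") auto
  qed
qed

lemma sqrt_seq_converges: "converges (\<lambda>n. sqrt_seq n x) (sqrt_seq_lim x)"
  unfolding sqrt_seq_lim_def using sqrt_seq_Cauchy someI_ex by metis

lemma sqrt_seq_lim_eqI: "converges (\<lambda>n. sqrt_seq n x) L \<Longrightarrow> sqrt_seq_lim x = L"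
  using converges_unique sqrt_seq_converges by metis

lemma linear_op_sqrt_seq_lim: "linear_op sqrt_seq_lim"
  unfolding linear_op_def
proof (intro conjI allI)
  fix x z
  show "sqrt_seq_lim (x + z) = sqrt_seq_lim x + sqrt_seq_lim z"
    using converges_add[OF sqrt_seq_converges sqrt_seq_converges, of x z]
    by (intro sqrt_seq_lim_eqI) (simp add: linear_opD[OF linear_op_sqrt_seq])
next
  fix r x
  show "sqrt_seq_lim (r *\<^sub>C x) = r *\<^sub>C sqrt_seq_lim x"
    using converges_scaleC[OF sqrt_seq_converges, of r x]
    by (intro sqrt_seq_lim_eqI) (simp add: linear_opD[OF linear_op_sqrt_seq])
qed

lemma cnorm_sqrt_seq_lim_le: "cnorm (sqrt_seq_lim x) \<le> cnorm x"
  using converges_cnorm[OF sqrt_seq_converges[of x]] cnorm_sqrt_seq_le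
  by (intro LIMSEQ_le_const2) auto

lemma sqrt_seq_lim_form:
  "Im (cinner x (sqrt_seq_lim x)) = 0" "Re (cinner x (sqrt_seq_lim x)) \<le> (cnorm x)\<^sup>2"
proof -
  have lim: "(\<lambda>n. cinner x (sqrt_seq n x)) \<longlonglongrightarrow> cinner x (sqrt_seq_lim x)"
    by (rule converges_cinner[OF sqrt_seq_converges])
  have "Im (cinner x (sqrt_seq n x)) = 0" for n
    unfolding sqrt_seq_def
      by (rule selfadjoint_form_real[OF selfadjoint_poly_op[OF one_minus_props(1,2)]])
  with tendsto_Im[OF lim] show "Im (cinner x (sqrt_seq_lim x)) = 0"
    by (simp add: LIMSEQ_const_iff)
  show "Re (cinner x (sqrt_seq_lim x)) \<le> (cnorm x)\<^sup>2"
    using tendsto_Re[OF lim] sqrt_seq_form_le by (intro LIMSEQ_le_const2) auto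
qed

lemma sqrt_seq_lim_commute:
  assumes "bounded_op T" and "\<And>x. T (a x) = a (T x)"
  shows "T (sqrt_seq_lim x) = sqrt_seq_lim (T x)"
proof -
  have Tl: "linear_op T" using assms(1) by (rule bounded_op_linear)
  obtain K where K: "\<And>x. cnorm (T x) \<le> K * cnorm x" using assms(1) by (auto simp: bounded_op_def)
  have "T (one_minus x) = one_minus (T x)" for x
    by (simp add: one_minus_def linear_opD[OF Tl] assms(2))
  then have "T (sqrt_seq n x) = sqrt_seq n (T x)" for n
    unfolding sqrt_seq_def by (rule poly_op_commute[OF linear_op_one_minus Tl])
  moreover have "converges (\<lambda>n. T (sqrt_seq n x)) (T (sqrt_seq_lim x))"
    by (rule converges_linear_op[OF Tl K sqrt_seq_converges])
  ultimately show ?thesis using sqrt_seq_lim_eqI by simp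
qed

text \<open>The limit of \<open>Y\<^sub>n (Y\<^sub>n x)\<close> is \<open>Y (Y x)\<close> only thanks to the uniform bound \<open>\<parallel>Y\<^sub>n\<parallel> \<le> 1\<close>.\<close>

lemma sqrt_seq_lim_fixed_point:
  "sqrt_seq_lim x = (1/2) *\<^sub>C (one_minus x + sqrt_seq_lim (sqrt_seq_lim x))"
proof -
  let ?Y = "sqrt_seq" and ?L = "sqrt_seq_lim"
  have "converges (\<lambda>n. ?Y n (?Y n x)) (?L (?L x))"
  proof (rule convergesI)
    show "cnorm (?Y n (?Y n x) - ?L (?L x))
        \<le> cnorm (?Y n x - ?L x) + cnorm (?Y n (?L x) - ?L (?L x))" for n
    proof -
      have "?Y n (?Y n x) - ?L (?L x) = ?Y n (?Y n x - ?L x) + (?Y n (?L x) - ?L (?L x))"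
        by (simp add: linear_opD[OF linear_op_sqrt_seq])
      then have "cnorm (?Y n (?Y n x) - ?L (?L x))
          \<le> cnorm (?Y n (?Y n x - ?L x)) + cnorm (?Y n (?L x) - ?L (?L x))"
        using cnorm_triangle by metis
      then show ?thesis using cnorm_sqrt_seq_le[of n "?Y n x - ?L x"] by linarith
    qed
    show "(\<lambda>n. cnorm (?Y n x - ?L x) + cnorm (?Y n (?L x) - ?L (?L x))) \<longlonglongrightarrow> 0"
      using tendsto_add[OF sqrt_seq_converges[of x, unfolded converges_def]
          sqrt_seq_converges[of "?L x", unfolded converges_def]]
      by simp
  qed
  then have "converges (\<lambda>n. ?Y (Suc n) x) ((1/2) *\<^sub>C (one_minus x + ?L (?L x)))"
    unfolding sqrt_seq_Suc by (intro converges_scaleC converges_add converges_const)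
  with converges_Suc[OF sqrt_seq_converges[of x]] show ?thesis
    by (rule converges_unique)
qed

lemma sqrt_constr_square: "sqrt_constr (sqrt_constr x) = a x"
proof -
  have "(2::complex) *\<^sub>C sqrt_seq_lim x = one_minus x + sqrt_seq_lim (sqrt_seq_lim x)"
    using arg_cong[OF sqrt_seq_lim_fixed_point[of x], of "\<lambda>v. (2::complex) *\<^sub>C v"]
    by (simp add: scaleC_scaleC scaleC_one)
  then show ?thesis
    by (simp add: sqrt_constr_def linear_opD[OF linear_op_sqrt_seq_lim] one_minus_def scaleC_two
        algebra_simps)
qed

lemma positive_op_sqrt_constr: "positive_op sqrt_constr"
  unfolding positive_op_def
proof (intro conjI allI)
  show "bounded_op sqrt_constr"
  proof (rule bounded_opI[of _ 2])
    show "linear_op sqrt_constr"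
      unfolding sqrt_constr_def using linear_op_diff[OF linear_op_id linear_op_sqrt_seq_lim]
      by (simp add: id_def)
    show "cnorm (sqrt_constr x) \<le> 2 * cnorm x" for x
      using cnorm_diff_le[of x "sqrt_seq_lim x"] cnorm_sqrt_seq_lim_le[of x]
      by (simp add: sqrt_constr_def)
  qed
  fix x
  show "Im (cinner x (sqrt_constr x)) = 0" "Re (cinner x (sqrt_constr x)) \<ge> 0"
    using sqrt_seq_lim_form[of x] by (simp_all add: sqrt_constr_def cinner_diff_right cnorm_square)
qed

lemma sqrt_constr_commute:
  assumes "bounded_op T" and "\<And>x. T (a x) = a (T x)"
  shows "T (sqrt_constr x) = sqrt_constr (T x)"
  using sqrt_seq_lim_commute[OF assms] bounded_op_linear[OF assms(1)]
  by (simp add: sqrt_constr_def linear_opD)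

text \<open>A positive square root \<open>d\<close> of \<open>a\<close> commutes with \<open>a\<close>, hence with \<open>s = sqrt_constr\<close>.
  Then \<open>(s + d) w = 0\<close> for \<open>w = (s - d) x\<close>, so positivity of \<open>s\<close> and \<open>d\<close> gives \<open>s w = d w = 0\<close>,
  i.e. \<open>(s - d)\<^sup>2 = 0\<close>.\<close>

lemma positive_sqrt_unique:
  assumes d: "positive_op d" and dd: "d \<circ> d = a"
  shows "d = sqrt_constr"
proof -
  let ?s = "sqrt_constr"
  have sp: "positive_op ?s" by (rule positive_op_sqrt_constr)
  have dl: "linear_op d" and sl: "linear_op ?s" using d sp by (simp_all add: positive_op_linear)
  have dda: "d (d x) = a x" for x using dd by (metis comp_apply)
  have ds: "d (?s x) = ?s (d x)" for x
    using d by (intro sqrt_constr_commute) (auto simp: positive_op_def simp flip: dda)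
  define e where "e x = ?s x - d x" for x
  have eh: "selfadjoint e"
    unfolding e_def
      using selfadjoint_diff[OF positive_op_selfadjoint[OF sp] positive_op_selfadjoint[OF d]] .
  have "e (e x) = 0" for x
  proof -
    define w where "w = e x"
    have "?s w + d w = 0"
      unfolding w_def e_def
        by (simp add: linear_opD[OF sl] linear_opD[OF dl] sqrt_constr_square dda ds)
    then have "Re (cinner w (?s w)) + Re (cinner w (d w)) = 0"
      by (metis cinner_add_right cinner_zero_right plus_complex.sel(1) zero_complex.sel(1))
    then have "Re (cinner w (?s w)) = 0" "Re (cinner w (d w)) = 0"
      using positive_op_Re_nonneg[OF sp, of w] positive_op_Re_nonneg[OF d, of w] by linarith+
    then have "?s w = 0" "d w = 0"
      using positive_op_form_zero[OF sp] positive_op_form_zero[OF d] by blast+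
    then show ?thesis by (simp add: e_def w_def)
  qed
  then have "cinner (e x) (e x) = 0" for x using selfadjointD[OF eh, of x "e x"] by simp
  then show ?thesis by (auto simp: e_def fun_eq_iff cinner_eq_zero)
qed

lemma op_sqrt_eq_sqrt_constr: "op_sqrt a = sqrt_constr"
  unfolding op_sqrt_def
proof (rule the_equality)
  show "positive_op sqrt_constr \<and> sqrt_constr \<circ> sqrt_constr = a"
    using positive_op_sqrt_constr sqrt_constr_square by (auto simp: fun_eq_iff)
qed (use positive_sqrt_unique in blast)

lemma positive_op_op_sqrt: "positive_op (op_sqrt a)"
  using positive_op_sqrt_constr by (simp add: op_sqrt_eq_sqrt_constr)

lemma op_sqrt_square: "op_sqrt a (op_sqrt a x) = a x"
  using sqrt_constr_square by (simp add: op_sqrt_eq_sqrt_constr)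

end

lemma cnorm_op_sqrt_le:
  assumes "positive_op a" and "\<And>x. Re (cinner x (a x)) \<le> (cnorm x)\<^sup>2"
  shows "cnorm (op_sqrt a x) \<le> cnorm x"
proof (rule power2_le_imp_le)
  have "(cnorm (op_sqrt a x))\<^sup>2 = Re (cinner x (a x))"
    using selfadjointD[OF positive_op_selfadjoint[OF positive_op_op_sqrt[OF assms]],
        of x "op_sqrt a x"]
    by (simp add: cnorm_square op_sqrt_square[OF assms])
  with assms(2) show "(cnorm (op_sqrt a x))\<^sup>2 \<le> (cnorm x)\<^sup>2" by simp
qed simp

section \<open>Projections of a von Neumann algebra\<close>

lemma von_neumann_algebra_bounded: "von_neumann_algebra M \<Longrightarrow> T \<in> M \<Longrightarrow> bounded_op T"
  unfolding von_neumann_algebra_def commutant_def by blast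

lemma commutant_commute: "T \<in> M \<Longrightarrow> S \<in> commutant M \<Longrightarrow> S \<circ> T = T \<circ> S"
  by (simp add: commutant_def)

lemma mem_von_neumann_algebraI:
  assumes "von_neumann_algebra M" and "bounded_op T"
    and "\<And>S. S \<in> commutant M \<Longrightarrow> S \<circ> T = T \<circ> S"
  shows "T \<in> M"
proof -
  have "T \<in> commutant (commutant M)"
    using assms(2,3) unfolding commutant_def by auto
  then show ?thesis using assms(1) by (simp add: von_neumann_algebra_def)
qed

lemma von_neumann_algebra_zero: "von_neumann_algebra M \<Longrightarrow> zero_op \<in> M"
  by (rule mem_von_neumann_algebraI[OF _ bounded_op_zero])
    (auto simp: commutant_def zero_op_def fun_eq_iff bounded_op_linear linear_opD)

lemma von_neumann_algebra_id_minus: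
  assumes "von_neumann_algebra M" and "a \<in> M" shows "(\<lambda>x. x - a x) \<in> M"
proof (rule mem_von_neumann_algebraI[OF assms(1)])
  show "bounded_op (\<lambda>x. x - a x)"
    using bounded_op_diff[OF bounded_op_id von_neumann_algebra_bounded[OF assms]] by simp
  fix S assume S: "S \<in> commutant M"
  then have "linear_op S" by (simp add: commutant_def bounded_op_linear)
  with commutant_commute[OF assms(2) S] show "S \<circ> (\<lambda>x. x - a x) = (\<lambda>x. x - a x) \<circ> S"
    by (auto simp: fun_eq_iff linear_opD dest: fun_cong)
qed

lemma projectionsD:
  assumes "von_neumann_algebra M" and "q \<in> projections M"
  shows "bounded_op q" "selfadjoint q" "\<And>x. q (q x) = q x"
proof -
  show b: "bounded_op q" using assms von_neumann_algebra_bounded by (auto simp: projections_def)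
  show "selfadjoint q" using selfadjoint_if_adj_eq[OF b] assms(2) by (auto simp: projections_def)
  show "q (q x) = q x" for x using assms(2) unfolding projections_def
    by (metis (mono_tags) comp_apply mem_Collect_eq)
qed

lemma zero_op_projection: "von_neumann_algebra M \<Longrightarrow> zero_op \<in> projections M"
  unfolding projections_def
  using von_neumann_algebra_zero adj_selfadjoint[OF bounded_op_zero selfadjoint_zero]
  by (auto simp: zero_op_def)

lemma op_le_zero_projection:
  assumes "von_neumann_algebra M" "r \<in> projections M" shows "op_le zero_op r"
  using positive_op_idempotent[OF projectionsD[OF assms]] projectionsD(1)[OF assms] bounded_op_zero
  by (simp add: op_le_def zero_op_def)

lemma proj_sup_eq_zero:
  assumes vn: "von_neumann_algebra M"
    and zero: "\<And>q z. q \<in> projections M \<Longrightarrow> P q \<Longrightarrow> q z = 0"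
  shows "proj_sup M {q \<in> projections M. P q} = zero_op"
  unfolding proj_sup_def
proof (rule the_equality)
  have S: "{q \<in> projections M. P q} \<subseteq> {zero_op}"
    using zero by (auto simp: zero_op_def fun_eq_iff)
  have zz: "op_le zero_op (zero_op :: 'a \<Rightarrow> 'a)"
    using op_le_zero_projection[OF vn zero_op_projection[OF vn]] .
  show "zero_op \<in> projections M \<and> (\<forall>q\<in>{q \<in> projections M. P q}. op_le q zero_op) \<and>
      (\<forall>r\<in>projections M. (\<forall>q\<in>{q \<in> projections M. P q}. op_le q r) \<longrightarrow> op_le zero_op r)"
    using zero_op_projection[OF vn] S zz op_le_zero_projection[OF vn] by auto
  fix p assume p: "p \<in> projections M \<and> (\<forall>q\<in>{q \<in> projections M. P q}. op_le q p) \<and>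
      (\<forall>r\<in>projections M. (\<forall>q\<in>{q \<in> projections M. P q}. op_le q r) \<longrightarrow> op_le p r)"
  then have "op_le p zero_op" using zero_op_projection[OF vn] S zz by blast
  moreover have "op_le zero_op p" using op_le_zero_projection[OF vn] p by blast
  ultimately show "p = zero_op" by (rule op_le_antisym)
qed

lemma proj_sup_eq_greatest:
  assumes "P \<in> S" and "P \<in> projections M" and "\<And>q. q \<in> S \<Longrightarrow> op_le q P"
  shows "proj_sup M S = P"
  unfolding proj_sup_def
proof (rule the_equality)
  show "P \<in> projections M \<and> (\<forall>q\<in>S. op_le q P) \<and>
      (\<forall>r\<in>projections M. (\<forall>q\<in>S. op_le q r) \<longrightarrow> op_le P r)"
    using assms by blast
  fix p assume p: "p \<in> projections M \<and> (\<forall>q\<in>S. op_le q p) \<and>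
      (\<forall>r\<in>projections M. (\<forall>q\<in>S. op_le q r) \<longrightarrow> op_le p r)"
  then have "op_le p P" using assms(2,3) by blast
  moreover have "op_le P p" using p assms(1) by blast
  ultimately show "p = P" by (rule op_le_antisym)
qed

lemma orth_proj_kernel_projection:
  assumes vn: "von_neumann_algebra M" and g: "g \<in> M" "selfadjoint g"
  shows "orth_proj {x. g x = 0} \<in> projections M"
proof -
  define K where "K = {x. g x = 0}"
  have gb: "bounded_op g" using von_neumann_algebra_bounded[OF vn g(1)] .
  have K: "closed_subspace K" unfolding K_def using closed_subspace_kernel[OF gb] .
  define P where "P = orth_proj K"
  have Pb: "bounded_op P" unfolding P_def using bounded_op_orth_proj[OF K] .
  \<comment> \<open>every \<open>T\<close> in the commutant leaves \<open>K\<close> invariant, and so does its adjoint\<close>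
  have "P \<circ> T = T \<circ> P" if T: "T \<in> commutant M" for T
  proof
    have Tb: "bounded_op T" using T by (simp add: commutant_def)
    have Tg: "T (g x) = g (T x)" for x using commutant_commute[OF g(1) T] by (metis comp_apply)
    have lin: "linear_op T" "linear_op (adj T)"
      using Tb by (simp_all add: bounded_op_linear linear_op_adj)
    fix x show "(P \<circ> T) x = (T \<circ> P) x"
      unfolding P_def comp_apply
    proof (rule orth_proj_commute[OF K lin(1)])
      show "T k \<in> K" if "k \<in> K" for k
        using that Tg[of k] linear_opD(3)[OF lin(1)] by (simp add: K_def)
      show "adj T k \<in> K" if "k \<in> K" for k
        using that adj_commute[OF Tb g(2) Tg, of k] linear_opD(3)[OF lin(2)] by (simp add: K_def)
    qed (rule adj_cinner[OF Tb])
  qed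
  then have "P \<in> M" using mem_von_neumann_algebraI[OF vn Pb] by metis
  moreover have "P \<circ> P = P" unfolding P_def using orth_proj_idem[OF K] by (auto simp: fun_eq_iff)
  moreover have "adj P = P" using adj_selfadjoint[OF Pb] selfadjoint_orth_proj[OF K]
    by (simp add: P_def)
  ultimately show ?thesis by (simp add: projections_def P_def K_def)
qed

lemma unit_intervalD:
  assumes "a \<in> unit_interval M"
  shows "a \<in> M" and "positive_op a" and "\<And>x. Re (cinner x (a x)) \<le> (cnorm x)\<^sup>2"
  using assms op_le_form[of a id] bounded_op_id
  by (auto simp: unit_interval_def op_le_def zero_op_def cnorm_square)

lemma null_n_eq_orth_proj_kernel:
  assumes vn: "von_neumann_algebra M" and "a \<in> M" and sa: "selfadjoint a"
  shows "null_n M a = orth_proj {x. a x = 0}"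
  unfolding null_n_def
proof (rule proj_sup_eq_greatest)
  define K where "K = {x. a x = 0}"
  have K: "closed_subspace K"
    unfolding K_def using closed_subspace_kernel von_neumann_algebra_bounded assms(1,2) by blast
  have P: "orth_proj K \<in> projections M"
    unfolding K_def using orth_proj_kernel_projection[OF assms] .
  note PD = projectionsD[OF vn P]
  have "a (orth_proj K z) = 0" for z using orth_proj_in(1)[OF K] by (simp add: K_def)
  then have "orth_proj K (a x) = 0" for x by (rule selfadjoint_comp_eq_zero[OF sa PD(2)])
  then have "orth_proj K \<circ> a = zero_op" by (auto simp: zero_op_def)
  with P show "orth_proj K \<in> {q \<in> projections M. q \<circ> a = zero_op}" "orth_proj K \<in> projections M"
    by simp_all
  fix q assume "q \<in> {q \<in> projections M. q \<circ> a = zero_op}"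
  then have q: "q \<in> projections M" and "\<And>z. q (a z) = 0" by (auto simp: zero_op_def fun_eq_iff)
  then have "a (q x) = 0" for x
    using selfadjoint_comp_eq_zero[OF projectionsD(2)[OF vn q] sa] by blast
  then show "op_le q (orth_proj K)"
    using op_le_projections[OF projectionsD[OF vn q] PD] orth_proj_id[OF K] by (simp add: K_def)
qed

lemma support_s_eq_orth_proj_fixed:
  assumes vn: "von_neumann_algebra M" and a: "a \<in> unit_interval M"
  shows "support_s M a = orth_proj {x. a x = x}"
  unfolding support_s_def
proof (rule proj_sup_eq_greatest)
  define g where "g = (\<lambda>x. x - a x)"
  have aM: "a \<in> M" and pos: "positive_op a" and le1: "\<And>x. Re (cinner x (a x)) \<le> (cnorm x)\<^sup>2"
    using unit_intervalD[OF a] by auto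
  have gM: "g \<in> M" unfolding g_def using von_neumann_algebra_id_minus[OF vn aM] .
  have sg: "selfadjoint g"
    unfolding g_def using selfadjoint_diff[OF selfadjoint_id positive_op_selfadjoint[OF pos]]
      by simp
  have K_eq: "{x. a x = x} = {x. g x = 0}" by (auto simp: g_def)
  have K: "closed_subspace {x. a x = x}"
    unfolding K_eq using closed_subspace_kernel[OF von_neumann_algebra_bounded[OF vn gM]] .
  have P: "orth_proj {x. a x = x} \<in> projections M"
    unfolding K_eq using orth_proj_kernel_projection[OF vn gM sg] .
  with op_le_orth_proj_fixed[OF pos K]
  show "orth_proj {x. a x = x} \<in> {q \<in> projections M. op_le q a}"
    "orth_proj {x. a x = x} \<in> projections M"
    by simp_all
  fix q assume "q \<in> {q \<in> projections M. op_le q a}"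
  then have q: "q \<in> projections M" and "op_le q a" by auto
  note qD = projectionsD[OF vn q]
  have "a (q x) = q x" for x
  proof (rule fixed_if_form_ge)
    show "cnorm (a (q x)) \<le> cnorm (q x)" by (rule cnorm_le_if_form_le[OF pos le1])
    show "Re (cinner (q x) (a (q x))) \<ge> (cnorm (q x))\<^sup>2"
      using op_le_form[OF \<open>op_le q a\<close>, of "q x"] qD(3) by (simp add: cnorm_square)
  qed
  then show "op_le q (orth_proj {x. a x = x})"
    using op_le_projections[OF qD projectionsD[OF vn P]] orth_proj_id[OF K] by simp
qed

section \<open>Strict elements\<close>

lemma strict_in_unit_interval_injective:
  assumes vn: "von_neumann_algebra M" and a: "a \<in> unit_interval M" and "strict_in M a"
    and "a y = 0"
  shows "y = 0"
proof (rule orth_proj_zero_opD)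
  have aM: "a \<in> M" and sa: "selfadjoint a"
    using unit_intervalD[OF a] positive_op_selfadjoint by auto
  show "closed_subspace {x. a x = 0}"
    using closed_subspace_kernel[OF von_neumann_algebra_bounded[OF vn aM]] .
  show "orth_proj {x. a x = 0} = zero_op"
    using \<open>strict_in M a\<close> null_n_eq_orth_proj_kernel[OF vn aM sa] by (simp add: strict_in_def)
qed (simp add: \<open>a y = 0\<close>)

lemma strict_in_unit_interval_no_fixed:
  assumes vn: "von_neumann_algebra M" and a: "a \<in> unit_interval M" and "strict_in M a"
    and "a y = y"
  shows "y = 0"
proof (rule orth_proj_zero_opD)
  have "a \<in> M" using unit_intervalD[OF a] by simp
  then have "bounded_op (\<lambda>x. x - a x)"
    using von_neumann_algebra_bounded[OF vn von_neumann_algebra_id_minus[OF vn]] by blast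
  moreover have "{x. x - a x = 0} = {x. a x = x}" by auto
  ultimately show "closed_subspace {x. a x = x}" using closed_subspace_kernel by metis
  show "orth_proj {x. a x = x} = zero_op"
    using \<open>strict_in M a\<close> support_s_eq_orth_proj_fixed[OF vn a] by (simp add: strict_in_def)
qed (simp add: \<open>a y = y\<close>)

lemma strict_inI:
  assumes vn: "von_neumann_algebra M" and sx: "selfadjoint x"
    and contraction: "\<And>z. cnorm (x z) \<le> cnorm z"
    and injective: "\<And>y. x y = 0 \<Longrightarrow> y = 0" and no_fixed: "\<And>y. x y = y \<Longrightarrow> y = 0"
  shows "strict_in M x"
  unfolding strict_in_def support_s_def null_n_def
proof
  show "proj_sup M {q \<in> projections M. op_le q x} = zero_op"
  proof (rule proj_sup_eq_zero[OF vn])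
    fix q z assume q: "q \<in> projections M" and "op_le q x"
    have "Re (cinner (q z) (x (q z))) \<ge> (cnorm (q z))\<^sup>2"
      using op_le_form[OF \<open>op_le q x\<close>, of "q z"] projectionsD(3)[OF vn q]
        by (simp add: cnorm_square)
    then show "q z = 0" using no_fixed fixed_if_form_ge contraction by blast
  qed
  show "proj_sup M {q \<in> projections M. q \<circ> x = zero_op} = zero_op"
  proof (rule proj_sup_eq_zero[OF vn])
    fix q z assume q: "q \<in> projections M" and "q \<circ> x = zero_op"
    then have "x (q z) = 0"
      using selfadjoint_comp_eq_zero[OF projectionsD(2)[OF vn q] sx]
      by (metis comp_apply zero_op_def)
    then show "q z = 0" by (rule injective)
  qed
qed

lemma strict_in_op_sqrt:
  assumes vn: "von_neumann_algebra M" and a: "a \<in> unit_interval M" and "strict_in M a"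
  shows "strict_in M (op_sqrt a)"
proof -
  have pos: "positive_op a" and le: "\<And>x. Re (cinner x (a x)) \<le> (cnorm x)\<^sup>2"
    using unit_intervalD[OF a] by auto
  note sq = op_sqrt_square[OF pos le]
  show ?thesis
  proof (rule strict_inI[OF vn])
    show "selfadjoint (op_sqrt a)"
      using positive_op_selfadjoint[OF positive_op_op_sqrt[OF pos le]] .
    show "cnorm (op_sqrt a z) \<le> cnorm z" for z using cnorm_op_sqrt_le[OF pos le] .
    show "y = 0" if "op_sqrt a y = 0" for y
      using that sq[of y] linear_opD(3)[OF positive_op_linear[OF positive_op_op_sqrt[OF pos le]]]
        strict_in_unit_interval_injective[OF vn a \<open>strict_in M a\<close>] by simp
    show "y = 0" if "op_sqrt a y = y" for y
      using that sq[of y] strict_in_unit_interval_no_fixed[OF vn a \<open>strict_in M a\<close>] by simp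
  qed
qed

lemma strict_in_comp:
  assumes vn: "von_neumann_algebra M" and a: "a \<in> unit_interval M" and b: "b \<in> unit_interval M"
    and "strict_in M a" and "strict_in M b" and "a \<circ> b = b \<circ> a"
  shows "strict_in M (a \<circ> b)"
proof (rule strict_inI[OF vn])
  have pa: "positive_op a" and la: "\<And>x. Re (cinner x (a x)) \<le> (cnorm x)\<^sup>2"
    and pb: "positive_op b" and lb: "\<And>x. Re (cinner x (b x)) \<le> (cnorm x)\<^sup>2"
    using unit_intervalD[OF a] unit_intervalD[OF b] by auto
  note a_le = cnorm_le_if_form_le[OF pa la] and b_le = cnorm_le_if_form_le[OF pb lb]
  show "selfadjoint (a \<circ> b)"
    using selfadjoint_comp_commute positive_op_selfadjoint pa pb \<open>a \<circ> b = b \<circ> a\<close> by blast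
  show "cnorm ((a \<circ> b) z) \<le> cnorm z" for z using a_le[of "b z"] b_le[of z] by simp
  show "y = 0" if "(a \<circ> b) y = 0" for y
    using that strict_in_unit_interval_injective[OF vn a \<open>strict_in M a\<close>, of "b y"]
      strict_in_unit_interval_injective[OF vn b \<open>strict_in M b\<close>, of y]
    by simp
  show "y = 0" if "(a \<circ> b) y = y" for y
  proof -
    have "cnorm (b y) = cnorm y" using that a_le[of "b y"] b_le[of y] by simp
    then have "b y = y" by (rule fixed_if_cnorm_eq[OF pb lb])
    with that show ?thesis using strict_in_unit_interval_no_fixed[OF vn a \<open>strict_in M a\<close>] by simp
  qed
qed

theorem lemma2p3:
  fixes M :: "('h::chilbert \<Rightarrow> 'h) set" and a b :: "'h \<Rightarrow> 'h"
  assumes "von_neumann_algebra M"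
    and "a \<in> unit_interval M" and "b \<in> unit_interval M"
    and "strict_in M a" and "strict_in M b"
  shows "strict_in M (op_sqrt a) \<and> (a \<circ> b = b \<circ> a \<longrightarrow> strict_in M (a \<circ> b))"
  using strict_in_op_sqrt[OF assms(1,2,4)] strict_in_comp[OF assms] by blast

end
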